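(* Let $\alpha\in\alpha_0\mathbb{Z}$ with $|\alpha|<\frac{1}{\sqrt2}$. Then for every $s\in\mathbb{Z}$ and every $\Psi\in\mathcal D$, the series $$\Phi_{\alpha,s}\Psi:=\sum_{t\in\mathbb{R}}(Y_{\alpha,t}\otimes Y_{\alpha,t-s})\Psi$$ (which on each summand $\mathcal H_\beta\otimes\mathcal H_\beta$ has only countably many nonzero terms) converges in norm in $\hat{\mathcal H}\otimes\hat{\mathcal H}$; the same holds with $\alpha$ replaced by $-\alpha$. Hence every coefficient of the formal series $\tilde\psi^\alpha(w,w^{-1})=Y_\alpha(w)\otimes Y_\alpha(w^{-1})+Y_{-\alpha}(w)\otimes Y_{-\alpha}(w^{-1})=\sum_{s}(\Phi_{\alpha,s}+\Phi_{-\alpha,s})w^{-s}$ defines a linear operator on $\mathcal D$.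
   Context: For $\beta\in\mathbb{R}$ let $\mathcal H_\beta$ be the Hilbert space carrying a unitary representation of the Heisenberg algebra: operators $J_{\beta,n}$, $n\in\mathbb{Z}$, with $[J_{\beta,m},J_{\beta,n}]=m\,\delta_{m+n,0}$, $J_{\beta,n}^*=J_{\beta,-n}$, $J_{\beta,0}=\beta\cdot\mathbf 1$, and a cyclic unit vector $\Omega_\beta$ with $J_{\beta,n}\Omega_\beta=0$ for $n>0$; $\mathcal H_\beta$ is the closure of the span $\mathcal H_\beta^{\rm fin}$ of the vectors $J_{\beta,-n_1}\cdots J_{\beta,-n_k}\Omega_\beta$, $n_i>0$. Fix $\alpha_0\in\mathbb{R}$ with $0<|\alpha_0|\le1$ and set $\hat{\mathcal H}=\bigoplus_{j\in\mathbb{Z}}\mathcal H_{j\alpha_0}$, $\hat J_n=\bigoplus_j J_{j\alpha_0,n}$. For $\alpha\in\alpha_0\mathbb{Z}$ let $c_\alpha$ be the unitary on $\hat{\mathcal H}$ mapping $\mathcal H_\beta\to\mathcal H_{\beta+\alpha}$ by $c_\alpha \hat J_{-n_1}\cdots\hat J_{-n_k}\Omega_\beta=\hat J_{-n_1}\cdots\hat J_{-n_k}\Omega_{\beta+\alpha}$ ($n_i>0$). Define the formal series $E^{\pm}(\alpha,z)=\exp\bigl(\mp\sum_{n>0}\frac{\alpha\hat J_{\pm n}}{n}z^{\mp n}\bigr)$ and $Y_\alpha(z)=c_\alpha E^-(\alpha,z)E^+(\alpha,z)z^{\alpha\hat J_0}$, where $z^{\alpha\hat J_0}$ acts as $z^{\alpha\beta}$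 on $\mathcal H_\beta$. With $d=\alpha^2/2$ write $Y_\alpha(z)=\sum_{s\in\mathbb{R}}Y_{\alpha,s}z^{-s-d}$; the coefficient $Y_{\alpha,s}$ is a bounded operator (for $|\alpha|\le1$) mapping $\mathcal H_\beta$ into $\mathcal H_{\beta+\alpha}$, nonzero on $\mathcal H_\beta$ only for $s\in\mathbb{Z}-\alpha\beta-d$. The domain $\mathcal D$ is the algebraic direct sum $\bigoplus_{j\in\mathbb{Z},\mathrm{alg}}\mathcal H^{\rm fin}_{j\alpha_0}\otimes_{\mathrm{alg}}\mathcal H^{\rm fin}_{j\alpha_0}$, a dense subspace of $\tilde{\mathcal H}=\bigoplus_j\mathcal H_{j\alpha_0}\otimes\mathcal H_{j\alpha_0}\subset\hat{\mathcal H}\otimes\hat{\mathcal H}$. Substituting $z=w^{-1}$ in $Y_\alpha(w)\otimes Y_\alpha(z)$ formally gives $Y_\alpha(w)\otimes Y_\alpha(w^{-1})=\sum_{s}\bigl(\sum_t Y_{\alpha,t}\otimes Y_{\alpha,t-s}\bigr)w^{-s}$. *)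

theory Defs
  imports "HOL-Analysis.Analysis" "HOL-Library.Multiset"
begin

text \<open>A basis index (j, lam) stands for the vector
  J_{-n_1} ... J_{-n_k} Omega_{j alpha0} in H_{j alpha0}, where lam is the
  multiset (partition) of the positive integers n_1,...,n_k.  A (finite)
  vector of the direct sum is given by its coordinates with respect to these
  spanning vectors.\<close>

type_synonym idx = "int \<times> nat multiset"
type_synonym vec = "idx \<Rightarrow> complex"
type_synonym tidx = "idx \<times> idx"
type_synonym tvec = "tidx \<Rightarrow> complex"

definition lin_ext :: "('a \<Rightarrow> 'b \<Rightarrow> complex) \<Rightarrow> ('a \<Rightarrow> complex) \<Rightarrow> 'b \<Rightarrow> complex" where
  "lin_ext f \<psi> = (\<lambda>y. \<Sum>x\<in>{x. \<psi> x \<noteq> 0}. \<psi> x * f x y)"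

definition basis :: "'a \<Rightarrow> 'a \<Rightarrow> complex" where
  "basis x = (\<lambda>y. if y = x then 1 else 0)"

definition smul :: "complex \<Rightarrow> ('a \<Rightarrow> complex) \<Rightarrow> 'a \<Rightarrow> complex" where
  "smul c f = (\<lambda>y. c * f y)"

text \<open>Heisenberg modes: for n > 0, J_n (annihilation) and J_{-n} (creation),
  acting on the spanning vectors as forced by [J_m,J_n] = m delta_{m+n,0}
  and J_n Omega = 0 (n>0).\<close>
definition Jann :: "nat \<Rightarrow> vec \<Rightarrow> vec" where
  "Jann n = lin_ext (\<lambda>(j, lam). smul (of_nat (n * count lam n)) (basis (j, lam - {#n#})))"

definition Jcre :: "nat \<Rightarrow> vec \<Rightarrow> vec" where
  "Jcre n = lin_ext (\<lambda>(j, lam). basis (j, lam + {#n#}))"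

definition Jann_prod :: "nat multiset \<Rightarrow> vec \<Rightarrow> vec" where
  "Jann_prod \<rho> = foldr (\<lambda>n f. Jann n \<circ> f) (sorted_list_of_multiset \<rho>) id"

definition Jcre_prod :: "nat multiset \<Rightarrow> vec \<Rightarrow> vec" where
  "Jcre_prod \<rho> = foldr (\<lambda>n f. Jcre n \<circ> f) (sorted_list_of_multiset \<rho>) id"

text \<open>Coefficient of prod_n J_{n}^{m_n} in exp(sum_n a_n J_n X^n):
   prod_n a_n^{m_n} / m_n!.\<close>
definition expcoef :: "(nat \<Rightarrow> real) \<Rightarrow> nat multiset \<Rightarrow> real" where
  "expcoef a \<rho> = (\<Prod>n\<in>set_mset \<rho>. a n ^ count \<rho> n / fact (count \<rho> n))"

definition partitions :: "nat \<Rightarrow> nat multiset set" where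
  "partitions q = {\<rho>. 0 \<notin># \<rho> \<and> sum_mset \<rho> = q}"

text \<open>Eplus alpha q = coefficient of z^{-q} in E^+(alpha,z) = exp(- sum_{n>0} alpha J_n z^{-n}/n).\<close>
definition Eplus :: "real \<Rightarrow> nat \<Rightarrow> vec \<Rightarrow> vec" where
  "Eplus \<alpha> q \<psi> = (\<lambda>y. \<Sum>\<rho>\<in>partitions q.
      of_real (expcoef (\<lambda>n. - \<alpha> / real n) \<rho>) * Jann_prod \<rho> \<psi> y)"

text \<open>Eminus alpha p = coefficient of z^{p} in E^-(alpha,z) = exp(sum_{n>0} alpha J_{-n} z^{n}/n).\<close>
definition Eminus :: "real \<Rightarrow> nat \<Rightarrow> vec \<Rightarrow> vec" where
  "Eminus \<alpha> p \<psi> = (\<lambda>y. \<Sum>\<rho>\<in>partitions p.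
      of_real (expcoef (\<lambda>n. \<alpha> / real n) \<rho>) * Jcre_prod \<rho> \<psi> y)"

text \<open>c_alpha for alpha = k * alpha0: maps H_{j alpha0} to H_{(j+k) alpha0}.\<close>
definition cshift :: "int \<Rightarrow> vec \<Rightarrow> vec" where
  "cshift k \<psi> = (\<lambda>(j, lam). \<psi> (j - k, lam))"

text \<open>Y_{alpha,s} (alpha = k*alpha0) on a spanning vector of H_beta, beta = j*alpha0:
  the coefficient of z^{-s-d} in c_alpha E^-(alpha,z) E^+(alpha,z) z^{alpha beta},
  i.e. the sum of c_alpha E^-_p E^+_q over p - q + alpha beta = -s - d
  (E^+_q vanishes on this vector for q > |lam|).\<close>
definition Ybasis :: "real \<Rightarrow> int \<Rightarrow> real \<Rightarrow> idx \<Rightarrow> vec" where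
  "Ybasis \<alpha>0 k s x = (case x of (j, lam) \<Rightarrow>
     (let \<alpha> = of_int k * \<alpha>0; \<beta> = of_int j * \<alpha>0; d = \<alpha>\<^sup>2 / 2 in
      cshift k (\<lambda>y. \<Sum>q\<in>{0..sum_mset lam}.
        (let p = real q - s - d - \<alpha> * \<beta> in
          if p \<in> \<nat> then Eminus \<alpha> (nat \<lfloor>p\<rfloor>) (Eplus \<alpha> q (basis (j, lam))) y else 0))))"

definition Ycoef :: "real \<Rightarrow> int \<Rightarrow> real \<Rightarrow> vec \<Rightarrow> vec" where
  "Ycoef \<alpha>0 k s = lin_ext (Ybasis \<alpha>0 k s)"

definition tensor_apply :: "(vec \<Rightarrow> vec) \<Rightarrow> (vec \<Rightarrow> vec) \<Rightarrow> tvec \<Rightarrow> tvec" where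
  "tensor_apply A B = lin_ext (\<lambda>(x, y). (\<lambda>(x', y'). A (basis x) x' * B (basis y) y'))"

definition Dom :: "tvec set" where
  "Dom = {\<Psi>. finite {x. \<Psi> x \<noteq> 0} \<and>
     (\<forall>j lam j' mu. \<Psi> ((j, lam), (j', mu)) \<noteq> 0 \<longrightarrow> j = j' \<and> 0 \<notin># lam \<and> 0 \<notin># mu)}"

text \<open>Norm: the spanning vectors are orthogonal with
  ||J_{-lam} Omega||^2 = prod_n n^{m_n} m_n!.\<close>
definition weight :: "nat multiset \<Rightarrow> real" where
  "weight lam = (\<Prod>n\<in>set_mset lam. real n ^ count lam n * fact (count lam n))"

definition tweight :: "tidx \<Rightarrow> real" where
  "tweight x = (case x of ((j, lam), (j', mu)) \<Rightarrow> weight lam * weight mu)"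

definition in_tspace :: "tvec \<Rightarrow> bool" where
  "in_tspace f \<longleftrightarrow> (\<lambda>x. tweight x * (cmod (f x))\<^sup>2) summable_on UNIV"

definition tdist :: "tvec \<Rightarrow> tvec \<Rightarrow> real" where
  "tdist f g = sqrt (\<Sum>\<^sub>\<infinity>x. tweight x * (cmod (f x - g x))\<^sup>2)"

text \<open>Norm convergence of the series sum_{t in R} v t to L in H^ (x) H^
  (unconditional: net of finite partial sums).\<close>
definition norm_conv :: "(real \<Rightarrow> tvec) \<Rightarrow> tvec \<Rightarrow> bool" where
  "norm_conv v L \<longleftrightarrow> in_tspace L \<and>
     ((\<lambda>F. tdist (\<lambda>x. \<Sum>t\<in>F. v t x) L) \<longlongrightarrow> 0) (finite_subsets_at_top UNIV)"

definition Phi_term :: "real \<Rightarrow> int \<Rightarrow> int \<Rightarrow> tvec \<Rightarrow> real \<Rightarrow> tvec" where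
  "Phi_term \<alpha>0 k s \<Psi> t = tensor_apply (Ycoef \<alpha>0 k t) (Ycoef \<alpha>0 k (t - of_int s)) \<Psi>"

end

theory Submission
  imports Defs
begin

text \<open>Write \<open>\<tau>\<^sub>n = |\<lambda>| - n - \<alpha>\<^sup>2/2 - \<alpha>\<beta>\<close>.  The vector \<open>Y(\<alpha>,t) e(j,\<lambda>)\<close> vanishes
  unless \<open>t = \<tau>\<^sub>n\<close> for some \<open>n\<close>, and then it lies in degree \<open>n\<close>.  Hence every coordinate
  of \<open>\<Phi>(\<alpha>,s) \<Psi>\<close> receives only finitely many nonzero terms, and the squared norm of the
  series of their absolute values is bounded by
  \<open>\<Sum>\<^sub>n \<parallel>Y(\<alpha>,\<tau>\<^sub>n) e(j,\<lambda>)\<parallel>\<^sup>2 \<parallel>Y(\<alpha>,\<tau>\<^sub>n - s) e(j,\<mu>)\<parallel>\<^sup>2\<close>.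
  These norms are controlled by \<open>M\<^sub>\<nu>(p) = \<parallel>E\<^sup>-\<^sub>p e(\<nu>)\<parallel>\<^sup>2\<close>.  For \<open>\<nu> = {#}\<close> one has
  \<open>p M(p) = \<alpha>\<^sup>2 \<Sum>\<^sub>i\<^sub><\<^sub>p M(i)\<close>, so \<open>M(p) = \<Prod>\<^sub>i\<^sub><\<^sub>p (i + \<alpha>\<^sup>2)/(i + 1) \<le> (p + 1) powr (\<alpha>\<^sup>2 - 1)\<close>,
  which is square summable exactly when \<open>\<alpha>\<^sup>2 < 1/2\<close>.  Adding a part \<open>n\<close> to \<open>\<nu>\<close> bounds
  \<open>M\<close> by a combination of \<open>M\<^sub>\<nu>(p)\<close> and \<open>M\<^sub>\<nu>(p - n)\<close>, so square summability holds for
  every \<open>\<nu>\<close>.  By Cauchy-Schwarz the products above are summable, and this dominates the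
  tails of the series.\<close>

abbreviation finite_support :: "('a \<Rightarrow> complex) \<Rightarrow> bool" where
  "finite_support v \<equiv> finite {x. v x \<noteq> 0}"

lemma sum_mult_delta_supported:
  fixes v :: "'a \<Rightarrow> complex"
  assumes "finite S" "\<And>x. x \<notin> S \<Longrightarrow> v x = 0"
  shows "(\<Sum>x\<in>S. v x * (if x = x0 then c else 0)) = v x0 * c"
proof -
  have "(\<Sum>x\<in>S. v x * (if x = x0 then c else 0)) = (\<Sum>x\<in>S. if x = x0 then v x0 * c else 0)"
    by (rule sum.cong) simp_all
  also have "\<dots> = v x0 * c" using assms by (auto simp: sum.delta)
  finally show ?thesis .
qed

lemma lin_ext_basis: "lin_ext f (basis x) = f x"
  by (auto simp: lin_ext_def basis_def)

lemma finite_support_basis: "finite_support (basis x)"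
  by (simp add: basis_def)

lemma norm_sum_squared_le:
  fixes z :: "'a \<Rightarrow> 'b::real_normed_vector"
  assumes "finite I"
  shows "(norm (\<Sum>i\<in>I. z i))\<^sup>2 \<le> real (card I) * (\<Sum>i\<in>I. (norm (z i))\<^sup>2)"
proof -
  have "(norm (\<Sum>i\<in>I. z i))\<^sup>2 \<le> (\<Sum>i\<in>I. norm (z i))\<^sup>2"
    by (intro power_mono norm_sum) auto
  also have "\<dots> \<le> (\<Sum>i\<in>I. (norm (z i))\<^sup>2) * real (card I)"
    by (rule sum_squared_le_sum_of_squares)
  finally show ?thesis by (simp add: mult.commute)
qed

lemma Jcre_apply:
  assumes "finite_support v"
  shows "Jcre n v = (\<lambda>(j, \<mu>). if n \<in># \<mu> then v (j, \<mu> - {#n#}) else 0)"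
proof (rule ext, clarify)
  fix j :: int and \<mu>
  have "(case x of (j, lam) \<Rightarrow> basis (j, lam + {#n#})) (j, \<mu>) =
      (if x = (j, \<mu> - {#n#}) then (if n \<in># \<mu> then 1 else 0) else 0)" for x
    by (cases x; cases "n \<in># \<mu>") (auto simp: basis_def insert_DiffM)
  then have "Jcre n v (j, \<mu>) = (\<Sum>x\<in>{x. v x \<noteq> 0}.
      v x * (if x = (j, \<mu> - {#n#}) then (if n \<in># \<mu> then 1 else 0) else 0))"
    unfolding Jcre_def lin_ext_def by simp
  also have "\<dots> = v (j, \<mu> - {#n#}) * (if n \<in># \<mu> then 1 else 0)"
    by (rule sum_mult_delta_supported) (use assms in auto)
  finally show "Jcre n v (j, \<mu>) = (if n \<in># \<mu> then v (j, \<mu> - {#n#}) else 0)" by simp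
qed

lemma Jann_apply:
  assumes "finite_support v"
  shows "Jann n v = (\<lambda>(j, \<mu>). of_nat (n * (count \<mu> n + 1)) * v (j, \<mu> + {#n#}))"
proof (rule ext, clarify)
  fix j :: int and \<mu>
  have "(case x of (j, lam) \<Rightarrow> smul (of_nat (n * count lam n)) (basis (j, lam - {#n#}))) (j, \<mu>) =
      (if x = (j, \<mu> + {#n#}) then of_nat (n * (count \<mu> n + 1)) else 0)" for x
  proof (cases x)
    case (Pair j' lam)
    show ?thesis
    proof (cases "n \<in># lam")
      case True
      then have "lam - {#n#} = \<mu> \<longleftrightarrow> lam = \<mu> + {#n#}" by (auto simp: insert_DiffM)
      then show ?thesis using Pair by (auto simp: smul_def basis_def algebra_simps)
    qed (use Pair in \<open>auto simp: smul_def basis_def count_eq_zero_iff\<close>)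
  qed
  then have "Jann n v (j, \<mu>) = (\<Sum>x\<in>{x. v x \<noteq> 0}.
      v x * (if x = (j, \<mu> + {#n#}) then of_nat (n * (count \<mu> n + 1)) else 0))"
    unfolding Jann_def lin_ext_def by simp
  also have "\<dots> = v (j, \<mu> + {#n#}) * of_nat (n * (count \<mu> n + 1))"
    by (rule sum_mult_delta_supported) (use assms in auto)
  finally show "Jann n v (j, \<mu>) = of_nat (n * (count \<mu> n + 1)) * v (j, \<mu> + {#n#})" by simp
qed

lemma finite_support_Jcre:
  assumes "finite_support v"
  shows "finite_support (Jcre n v)"
proof -
  have "{x. Jcre n v x \<noteq> 0} \<subseteq> (\<lambda>(j, \<mu>). (j, \<mu> + {#n#})) ` {x. v x \<noteq> 0}"
  proof clarify
    fix j \<mu> assume "Jcre n v (j, \<mu>) \<noteq> 0"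
    then have "n \<in># \<mu>" "v (j, \<mu> - {#n#}) \<noteq> 0"
      by (auto simp: Jcre_apply[OF assms] split: if_splits)
    then show "(j, \<mu>) \<in> (\<lambda>(j, \<mu>). (j, \<mu> + {#n#})) ` {x. v x \<noteq> 0}"
      by (intro image_eqI[of _ _ "(j, \<mu> - {#n#})"]) (auto simp: insert_DiffM)
  qed
  then show ?thesis using assms finite_surj by blast
qed

lemma Jcre_prod_apply:
  assumes "finite_support v"
  shows "Jcre_prod \<rho> v = (\<lambda>(j, \<mu>). if \<rho> \<subseteq># \<mu> then v (j, \<mu> - \<rho>) else 0)"
proof -
  have "foldr (\<lambda>n f. Jcre n \<circ> f) xs id v =
      (\<lambda>(j, \<mu>). if mset xs \<subseteq># \<mu> then v (j, \<mu> - mset xs) else 0)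
    \<and> finite_support (foldr (\<lambda>n f. Jcre n \<circ> f) xs id v)" for xs
  proof (induction xs)
    case (Cons a xs)
    let ?w = "foldr (\<lambda>n f. Jcre n \<circ> f) xs id v"
    have w: "?w = (\<lambda>(j, \<mu>). if mset xs \<subseteq># \<mu> then v (j, \<mu> - mset xs) else 0)"
      and fw: "finite_support ?w" using Cons.IH by blast+
    have eq: "foldr (\<lambda>n f. Jcre n \<circ> f) (a # xs) id v = Jcre a ?w" by simp
    show ?case unfolding eq
    proof
      show "Jcre a ?w = (\<lambda>(j, \<mu>). if mset (a # xs) \<subseteq># \<mu> then v (j, \<mu> - mset (a # xs)) else 0)"
        unfolding Jcre_apply[OF fw]
      proof (rule ext, clarify)
        fix j \<mu>
        show "(if a \<in># \<mu> then ?w (j, \<mu> - {#a#}) else 0) =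
            (if mset (a # xs) \<subseteq># \<mu> then v (j, \<mu> - mset (a # xs)) else 0)"
          unfolding w by (simp add: insert_subset_eq_iff)
      qed
      show "finite_support (Jcre a ?w)" by (rule finite_support_Jcre[OF fw])
    qed
  qed (use assms in auto)
  from this[of "sorted_list_of_multiset \<rho>"] show ?thesis
    unfolding Jcre_prod_def by (simp only: mset_sorted_list_of_multiset)
qed

definition homogeneous :: "nat \<Rightarrow> int \<Rightarrow> vec \<Rightarrow> bool" where
  "homogeneous D j v \<longleftrightarrow> finite_support v \<and>
     (\<forall>j' \<mu>. v (j', \<mu>) \<noteq> 0 \<longrightarrow> j' = j \<and> sum_mset \<mu> = D)"

lemma homogeneous_basis: "homogeneous (sum_mset lam) j (basis (j, lam))"
  by (auto simp: homogeneous_def basis_def)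

lemma homogeneous_Jann:
  assumes "homogeneous D j v"
  shows "homogeneous (D - n) j (Jann n v)"
proof -
  have fv: "finite_support v" using assms by (simp add: homogeneous_def)
  have "{x. Jann n v x \<noteq> 0} \<subseteq> (\<lambda>(j, \<mu>). (j, \<mu> - {#n#})) ` {x. v x \<noteq> 0}"
  proof clarify
    fix j \<mu> assume "Jann n v (j, \<mu>) \<noteq> 0"
    then have "v (j, \<mu> + {#n#}) \<noteq> 0" by (auto simp: Jann_apply[OF fv])
    then show "(j, \<mu>) \<in> (\<lambda>(j, \<mu>). (j, \<mu> - {#n#})) ` {x. v x \<noteq> 0}"
      by (intro image_eqI[of _ _ "(j, \<mu> + {#n#})"]) auto
  qed
  then have "finite_support (Jann n v)" using fv finite_surj by blast
  moreover have "j' = j \<and> sum_mset \<mu> = D - n" if "Jann n v (j', \<mu>) \<noteq> 0" for j' \<mu>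
  proof -
    have "v (j', \<mu> + {#n#}) \<noteq> 0" using that by (simp add: Jann_apply[OF fv])
    then have "j' = j \<and> sum_mset (\<mu> + {#n#}) = D" using assms unfolding homogeneous_def by blast
    then show ?thesis by auto
  qed
  ultimately show ?thesis by (simp add: homogeneous_def)
qed

lemma homogeneous_Jann_prod:
  assumes "homogeneous D j v"
  shows "homogeneous (D - sum_mset \<rho>) j (Jann_prod \<rho> v)"
proof -
  have "homogeneous (D - sum_list xs) j (foldr (\<lambda>n f. Jann n \<circ> f) xs id v)" for xs
  proof (induction xs)
    case (Cons a xs)
    then show ?case using homogeneous_Jann[OF Cons.IH, of a] by (simp add: diff_diff_left add.commute)
  qed (use assms in simp)
  from this[of "sorted_list_of_multiset \<rho>"] show ?thesis
    unfolding Jann_prod_def by (metis mset_sorted_list_of_multiset sum_mset_sum_list)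
qed

lemma size_le_sum_mset: "0 \<notin># (\<rho>::nat multiset) \<Longrightarrow> size \<rho> \<le> sum_mset \<rho>"
proof (induction \<rho>)
  case (add x \<rho>)
  then have "x \<ge> 1" "size \<rho> \<le> sum_mset \<rho>" by auto
  then show ?case by simp
qed simp

lemma member_le_sum_mset: "x \<in># (\<rho>::nat multiset) \<Longrightarrow> x \<le> sum_mset \<rho>"
  by (metis le_add1 multi_member_split sum_mset.add_mset)

lemma finite_partitions: "finite (partitions q)"
proof -
  have "partitions q \<subseteq> (\<Union>m\<in>{..q}. multisets_of_size {..q} m)"
    unfolding partitions_def multisets_of_size_def
    using size_le_sum_mset member_le_sum_mset by fastforce
  moreover have "finite (\<Union>m\<in>{..q}. multisets_of_size {..q} m)" by auto
  ultimately show ?thesis by (rule finite_subset)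
qed

lemma partitions_0: "partitions 0 = {{#}}"
  unfolding partitions_def by (auto simp: sum_mset_0_iff) (metis multiset_nonemptyE)

lemma partitions_containing:
  assumes "n > 0" "n \<le> p"
  shows "{\<rho>\<in>partitions p. n \<in># \<rho>} = (\<lambda>\<rho>. \<rho> + {#n#}) ` partitions (p - n)"
proof (rule set_eqI, rule iffI)
  fix \<rho> assume "\<rho> \<in> {\<rho>\<in>partitions p. n \<in># \<rho>}"
  then have r: "0 \<notin># \<rho>" "sum_mset \<rho> = p" "n \<in># \<rho>" by (auto simp: partitions_def)
  then have "\<rho> - {#n#} \<in> partitions (p - n)"
    by (auto simp: partitions_def dest: in_diffD)
      (metis add_diff_cancel_left' insert_DiffM sum_mset.add_mset)
  moreover have "\<rho> = (\<rho> - {#n#}) + {#n#}" using r by simp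
  ultimately show "\<rho> \<in> (\<lambda>\<rho>. \<rho> + {#n#}) ` partitions (p - n)" by blast
qed (use assms in \<open>auto simp: partitions_def\<close>)

lemma sum_mset_eq_sum_count:
  assumes "finite S" "set_mset \<rho> \<subseteq> S"
  shows "sum_mset \<rho> = (\<Sum>n\<in>S. n * count \<rho> n)"
  using assms(2)
proof (induction \<rho>)
  case empty then show ?case by simp
next
  case (add x \<rho>)
  then have "x \<in> S" by auto
  have "(\<Sum>n\<in>S. n * count (add_mset x \<rho>) n) = (\<Sum>n\<in>S. n * count \<rho> n + (if n = x then x else 0))"
    by (rule sum.cong) auto
  also have "\<dots> = (\<Sum>n\<in>S. n * count \<rho> n) + x"
    using \<open>x \<in> S\<close> assms(1) by (simp add: sum.distrib)
  finally show ?case using add by simp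
qed

lemma homogeneous_Eplus:
  assumes "homogeneous D j v"
  shows "homogeneous (D - q) j (Eplus \<alpha> q v)"
proof -
  have h: "homogeneous (D - q) j (Jann_prod \<rho> v)" if "\<rho> \<in> partitions q" for \<rho>
    using homogeneous_Jann_prod[OF assms, of \<rho>] that by (simp add: partitions_def)
  have supp: "{x. Eplus \<alpha> q v x \<noteq> 0} \<subseteq> (\<Union>\<rho>\<in>partitions q. {x. Jann_prod \<rho> v x \<noteq> 0})"
    unfolding Eplus_def by (auto dest: sum.not_neutral_contains_not_neutral)
  moreover have "finite (\<Union>\<rho>\<in>partitions q. {x. Jann_prod \<rho> v x \<noteq> 0})"
    using h finite_partitions unfolding homogeneous_def by blast
  ultimately have "finite_support (Eplus \<alpha> q v)" by (rule finite_subset)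
  moreover have "j' = j \<and> sum_mset \<mu> = D - q" if "Eplus \<alpha> q v (j', \<mu>) \<noteq> 0" for j' \<mu>
    using supp that h unfolding homogeneous_def by blast
  ultimately show ?thesis by (simp add: homogeneous_def)
qed

abbreviation cre_coef :: "real \<Rightarrow> nat multiset \<Rightarrow> real" where
  "cre_coef \<alpha> \<equiv> expcoef (\<lambda>n. \<alpha> / real n)"

lemma Eminus_apply:
  assumes "finite_support v"
  shows "Eminus \<alpha> p v = (\<lambda>(j, \<mu>). \<Sum>\<rho>\<in>partitions p.
      of_real (cre_coef \<alpha> \<rho>) * (if \<rho> \<subseteq># \<mu> then v (j, \<mu> - \<rho>) else 0))"
  unfolding Eminus_def Jcre_prod_apply[OF assms] by auto

lemma Eminus_nonzero_degree:
  assumes "homogeneous D j v" "Eminus \<alpha> p v (j', \<mu>) \<noteq> 0"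
  shows "j' = j \<and> sum_mset \<mu> = D + p"
proof -
  have "finite_support v" using assms(1) by (simp add: homogeneous_def)
  then have "(\<Sum>\<rho>\<in>partitions p. of_real (cre_coef \<alpha> \<rho>) *
      (if \<rho> \<subseteq># \<mu> then v (j', \<mu> - \<rho>) else 0)) \<noteq> 0"
    using assms(2) by (simp add: Eminus_apply)
  then obtain \<rho> where "\<rho> \<in> partitions p"
    "of_real (cre_coef \<alpha> \<rho>) * (if \<rho> \<subseteq># \<mu> then v (j', \<mu> - \<rho>) else 0) \<noteq> 0"
    by (rule sum.not_neutral_contains_not_neutral)
  then have r: "\<rho> \<in> partitions p" "\<rho> \<subseteq># \<mu>" "v (j', \<mu> - \<rho>) \<noteq> 0"
    by (auto split: if_splits)
  then have "j' = j" "sum_mset (\<mu> - \<rho>) = D" using assms(1) unfolding homogeneous_def by auto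
  moreover have "sum_mset \<mu> = sum_mset (\<mu> - \<rho>) + sum_mset \<rho>"
    using r(2) by (metis subset_mset.diff_add sum_mset.union)
  ultimately show ?thesis using r(1) by (simp add: partitions_def)
qed

lemma Eminus_basis:
  "Eminus \<alpha> p (basis (j', \<nu>)) (j, \<mu>) =
    (if j = j' \<and> \<nu> \<subseteq># \<mu> \<and> \<mu> - \<nu> \<in> partitions p then of_real (cre_coef \<alpha> (\<mu> - \<nu>)) else 0)"
proof -
  have iff: "(\<rho> \<subseteq># \<mu> \<and> \<mu> - \<rho> = \<nu>) \<longleftrightarrow> (\<nu> \<subseteq># \<mu> \<and> \<rho> = \<mu> - \<nu>)" for \<rho>
  proof
    assume "\<rho> \<subseteq># \<mu> \<and> \<mu> - \<rho> = \<nu>"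
    then have "\<mu> = \<nu> + \<rho>" by (metis subset_mset.diff_add add.commute)
    then show "\<nu> \<subseteq># \<mu> \<and> \<rho> = \<mu> - \<nu>" by simp
  next
    assume "\<nu> \<subseteq># \<mu> \<and> \<rho> = \<mu> - \<nu>"
    then have "\<mu> = \<nu> + \<rho>" by (metis subset_mset.add_diff_inverse)
    then show "\<rho> \<subseteq># \<mu> \<and> \<mu> - \<rho> = \<nu>" by simp
  qed
  have "Eminus \<alpha> p (basis (j', \<nu>)) (j, \<mu>) = (\<Sum>\<rho>\<in>partitions p. if \<rho> = \<mu> - \<nu> then
      (if j = j' \<and> \<nu> \<subseteq># \<mu> then of_real (cre_coef \<alpha> \<rho>) else 0) else 0)"
    unfolding Eminus_apply[OF finite_support_basis] prod.case
    by (intro sum.cong) (use iff in \<open>auto simp: basis_def\<close>)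
  also have "\<dots> = (if \<mu> - \<nu> \<in> partitions p then
      (if j = j' \<and> \<nu> \<subseteq># \<mu> then of_real (cre_coef \<alpha> (\<mu> - \<nu>)) else 0) else 0)"
    by (simp add: sum.delta' finite_partitions)
  finally show ?thesis by auto
qed

lemma Eminus_expand:
  assumes "finite S" "\<And>u. u \<notin> S \<Longrightarrow> v u = 0"
  shows "Eminus \<alpha> p v y = (\<Sum>u\<in>S. v u * Eminus \<alpha> p (basis u) y)"
proof -
  have fv: "finite_support v" using assms by (metis (mono_tags) finite_subset mem_Collect_eq subsetI)
  obtain j \<mu> where y: "y = (j, \<mu>)" by fastforce
  have bz: "basis u z = (if u = z then 1 else 0)" for u z by (auto simp: basis_def)
  have v: "v z = (\<Sum>u\<in>S. v u * basis u z)" for z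
    unfolding bz using sum_mult_delta_supported[OF assms(1), of v z 1] assms(2) by simp
  have "Eminus \<alpha> p v y = (\<Sum>\<rho>\<in>partitions p. of_real (cre_coef \<alpha> \<rho>) *
      (if \<rho> \<subseteq># \<mu> then (\<Sum>u\<in>S. v u * basis u (j, \<mu> - \<rho>)) else 0))"
    unfolding y Eminus_apply[OF fv] by (simp only: v[symmetric] prod.case)
  also have "\<dots> = (\<Sum>\<rho>\<in>partitions p. \<Sum>u\<in>S. v u * (of_real (cre_coef \<alpha> \<rho>) *
      (if \<rho> \<subseteq># \<mu> then basis u (j, \<mu> - \<rho>) else 0)))"
    by (rule sum.cong) (auto simp: sum_distrib_left algebra_simps)
  also have "\<dots> = (\<Sum>u\<in>S. v u * Eminus \<alpha> p (basis u) y)"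
    unfolding y Eminus_apply[OF finite_support_basis] by (subst sum.swap) (simp add: sum_distrib_left)
  finally show ?thesis .
qed

definition sq_summable :: "(nat \<Rightarrow> real) \<Rightarrow> bool" where
  "sq_summable f \<longleftrightarrow> summable (\<lambda>n. (f n)\<^sup>2)"

lemma sq_summable_mono:
  assumes "sq_summable g" "\<And>n. 0 \<le> f n" "\<And>n. f n \<le> g n"
  shows "sq_summable f"
  unfolding sq_summable_def
proof (rule summable_comparison_test[OF _ assms(1)[unfolded sq_summable_def]])
  show "\<exists>N. \<forall>n\<ge>N. norm ((f n)\<^sup>2) \<le> (g n)\<^sup>2"
    using assms(2,3) by (intro exI[of _ 0]) (auto intro!: power_mono)
qed

lemma sq_summable_add:
  assumes "sq_summable f" "sq_summable g"
  shows "sq_summable (\<lambda>n. f n + g n)"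
  unfolding sq_summable_def
proof (rule summable_comparison_test)
  show "summable (\<lambda>n. 2 * (f n)\<^sup>2 + 2 * (g n)\<^sup>2)"
    using assms unfolding sq_summable_def by (intro summable_add summable_mult)
  have "(x + y)\<^sup>2 \<le> 2 * x\<^sup>2 + 2 * y\<^sup>2" for x y :: real
    using sum_squares_bound[of x y] by (simp add: power2_sum)
  then show "\<exists>N. \<forall>n\<ge>N. norm ((f n + g n)\<^sup>2) \<le> 2 * (f n)\<^sup>2 + 2 * (g n)\<^sup>2" by auto
qed

lemma sq_summable_cmult: "sq_summable f \<Longrightarrow> sq_summable (\<lambda>n. c * f n)"
  unfolding sq_summable_def by (simp add: power_mult_distrib summable_mult)

lemma sq_summable_shift: "sq_summable f \<Longrightarrow> sq_summable (\<lambda>p. f (p - n))"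
  unfolding sq_summable_def
proof -
  assume "summable (\<lambda>n. (f n)\<^sup>2)"
  then have "summable (\<lambda>p. (f (p + n - n))\<^sup>2)" by simp
  then show "summable (\<lambda>p. (f (p - n))\<^sup>2)"
    using summable_iff_shift[of "\<lambda>p. (f (p - n))\<^sup>2" n] by simp
qed

lemma sq_summable_shift_if: "sq_summable f \<Longrightarrow> sq_summable (\<lambda>p. if L \<le> p + q then f (p + q - L) else 0)"
proof -
  assume f: "sq_summable f"
  have "sq_summable (\<lambda>p. f (p + q - L))"
  proof (cases "q \<le> L")
    case True
    have "summable (\<lambda>p. (f (p + (L - q) + q - L))\<^sup>2)" using f True unfolding sq_summable_def by simp
    then show ?thesis unfolding sq_summable_def using summable_iff_shift[of "\<lambda>p. (f (p + q - L))\<^sup>2" "L - q"]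
      by (simp add: add.assoc)
  next
    case False
    then have e: "(\<lambda>p. (f (p + q - L))\<^sup>2) = (\<lambda>p. (f (p + (q - L)))\<^sup>2)" by (auto intro!: ext)
    show ?thesis using f unfolding sq_summable_def e
      using summable_iff_shift[of "\<lambda>p. (f p)\<^sup>2" "q - L"] by simp
  qed
  then show ?thesis unfolding sq_summable_def
    by (rule summable_comparison_test[rotated]) (intro exI[of _ 0], auto)
qed

lemma sq_summable_sum: "finite I \<Longrightarrow> (\<And>i. i \<in> I \<Longrightarrow> sq_summable (f i)) \<Longrightarrow> sq_summable (\<lambda>n. \<Sum>i\<in>I. f i n)"
proof (induction I rule: finite_induct)
  case empty then show ?case by (simp add: sq_summable_def)
next
  case (insert x F)
  then show ?case by (simp add: sq_summable_add)
qed

lemma summable_mult_sq_summable: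
  assumes "sq_summable f" "sq_summable g"
  shows "summable (\<lambda>n. f n * g n)"
proof (rule summable_comparison_test)
  show "summable (\<lambda>n. (f n)\<^sup>2 + (g n)\<^sup>2)"
    using assms unfolding sq_summable_def by (rule summable_add)
  have "\<bar>x * y\<bar> \<le> x\<^sup>2 + y\<^sup>2" for x y :: real
    using sum_squares_bound[of "\<bar>x\<bar>" "\<bar>y\<bar>"] mult_nonneg_nonneg[OF abs_ge_zero abs_ge_zero, of x y]
    unfolding abs_mult power2_abs by linarith
  then show "\<exists>N. \<forall>n\<ge>N. norm (f n * g n) \<le> (f n)\<^sup>2 + (g n)\<^sup>2" by auto
qed

section \<open>Norms of \<open>E\<^sup>-\<close> on basis vectors\<close>

lemma expcoef_superset:
  assumes "finite S" "set_mset \<rho> \<subseteq> S"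
  shows "expcoef a \<rho> = (\<Prod>n\<in>S. a n ^ count \<rho> n / fact (count \<rho> n))"
  unfolding expcoef_def
  by (rule prod.mono_neutral_left) (use assms in \<open>auto simp: not_in_iff\<close>)

lemma weight_superset:
  assumes "finite S" "set_mset \<rho> \<subseteq> S"
  shows "weight \<rho> = (\<Prod>n\<in>S. real n ^ count \<rho> n * fact (count \<rho> n))"
  unfolding weight_def
  by (rule prod.mono_neutral_left) (use assms in \<open>auto simp: not_in_iff\<close>)

lemma prod_count_add_mset:
  fixes g :: "nat \<Rightarrow> nat \<Rightarrow> real"
  assumes "finite S" "n \<in> S"
  shows "(\<Prod>m\<in>S. g m (count (\<rho> + {#n#}) m)) = g n (count \<rho> n + 1) * (\<Prod>m\<in>S - {n}. g m (count \<rho> m))"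
proof -
  have "(\<Prod>m\<in>S. g m (count (\<rho> + {#n#}) m)) =
      g n (count (\<rho> + {#n#}) n) * (\<Prod>m\<in>S - {n}. g m (count (\<rho> + {#n#}) m))"
    by (rule prod.remove[OF assms])
  also have "(\<Prod>m\<in>S - {n}. g m (count (\<rho> + {#n#}) m)) = (\<Prod>m\<in>S - {n}. g m (count \<rho> m))"
    by (rule prod.cong) auto
  finally show ?thesis by simp
qed

lemma expcoef_add_mset:
  "expcoef a (\<rho> + {#n#}) = expcoef a \<rho> * a n / (real (count \<rho> n) + 1)"
proof -
  let ?S = "insert n (set_mset \<rho>)"
  let ?g = "\<lambda>m c. a m ^ c / fact c"
  have f: "finite ?S" "n \<in> ?S" by auto
  have A: "expcoef a (\<rho> + {#n#}) = (\<Prod>m\<in>?S. ?g m (count (\<rho> + {#n#}) m))"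
    by (rule expcoef_superset) auto
  have B: "expcoef a \<rho> = (\<Prod>m\<in>?S. ?g m (count \<rho> m))"
    by (rule expcoef_superset) auto
  have C: "?g n (count \<rho> n + 1) = ?g n (count \<rho> n) * (a n / (real (count \<rho> n) + 1))"
    by (simp add: field_simps)
  show ?thesis unfolding A B prod_count_add_mset[OF f, of ?g] prod.remove[OF f] C by simp
qed

lemma weight_add_mset:
  "weight (\<rho> + {#n#}) = weight \<rho> * real n * (real (count \<rho> n) + 1)"
proof -
  let ?S = "insert n (set_mset \<rho>)"
  let ?g = "\<lambda>m c. real m ^ c * fact c"
  have f: "finite ?S" "n \<in> ?S" by auto
  have A: "weight (\<rho> + {#n#}) = (\<Prod>m\<in>?S. ?g m (count (\<rho> + {#n#}) m))"
    by (rule weight_superset) auto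
  have B: "weight \<rho> = (\<Prod>m\<in>?S. ?g m (count \<rho> m))"
    by (rule weight_superset) auto
  have C: "?g n (count \<rho> n + 1) = ?g n (count \<rho> n) * (real n * (real (count \<rho> n) + 1))"
    by (simp add: field_simps)
  show ?thesis unfolding A B prod_count_add_mset[OF f, of ?g] prod.remove[OF f] C by simp
qed

lemma weight_nonneg: "weight \<rho> \<ge> 0"
  unfolding weight_def by (intro prod_nonneg) auto

text \<open>\<open>Eminus_norm2 \<alpha> \<nu> p = \<parallel>E\<^sup>-\<^sub>p e(\<nu>)\<parallel>\<^sup>2\<close>, since the vectors \<open>e(\<nu> + \<rho>)\<close> for distinct
  \<open>\<rho>\<close> are orthogonal.\<close>

definition Eminus_norm2 :: "real \<Rightarrow> nat multiset \<Rightarrow> nat \<Rightarrow> real" where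
  "Eminus_norm2 \<alpha> \<nu> p = (\<Sum>\<rho>\<in>partitions p. (cre_coef \<alpha> \<rho>)\<^sup>2 * weight (\<nu> + \<rho>))"

lemma Eminus_norm2_nonneg: "Eminus_norm2 \<alpha> \<nu> p \<ge> 0"
  unfolding Eminus_norm2_def by (intro sum_nonneg mult_nonneg_nonneg weight_nonneg) auto

lemma Eminus_basis_norm2_le:
  assumes "finite A"
  shows "(\<Sum>\<mu>\<in>A. weight \<mu> * (cmod (Eminus \<alpha> p (basis (j', \<nu>)) (j, \<mu>)))\<^sup>2) \<le> Eminus_norm2 \<alpha> \<nu> p"
proof -
  let ?A' = "{\<mu>\<in>A. j = j' \<and> \<nu> \<subseteq># \<mu> \<and> \<mu> - \<nu> \<in> partitions p}"
  have "(\<Sum>\<mu>\<in>A. weight \<mu> * (cmod (Eminus \<alpha> p (basis (j', \<nu>)) (j, \<mu>)))\<^sup>2)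
      = (\<Sum>\<mu>\<in>A. if \<mu> \<in> ?A' then weight (\<nu> + (\<mu> - \<nu>)) * (cre_coef \<alpha> (\<mu> - \<nu>))\<^sup>2 else 0)"
    by (rule sum.cong) (auto simp: Eminus_basis)
  also have "\<dots> = (\<Sum>\<mu>\<in>?A'. weight (\<nu> + (\<mu> - \<nu>)) * (cre_coef \<alpha> (\<mu> - \<nu>))\<^sup>2)"
    using assms by (simp add: sum.inter_filter[symmetric] Int_def)
  also have "\<dots> = (\<Sum>\<rho>\<in>(\<lambda>\<mu>. \<mu> - \<nu>) ` ?A'. weight (\<nu> + \<rho>) * (cre_coef \<alpha> \<rho>)\<^sup>2)"
  proof (rule sum.reindex[symmetric, unfolded comp_def])
    show "inj_on (\<lambda>\<mu>. \<mu> - \<nu>) ?A'"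
      by (rule inj_onI) (metis (no_types, lifting) mem_Collect_eq subset_mset.add_diff_inverse)
  qed
  also have "\<dots> \<le> (\<Sum>\<rho>\<in>partitions p. weight (\<nu> + \<rho>) * (cre_coef \<alpha> \<rho>)\<^sup>2)"
    by (rule sum_mono2) (auto simp: finite_partitions weight_nonneg)
  also have "\<dots> = Eminus_norm2 \<alpha> \<nu> p" by (simp add: Eminus_norm2_def mult.commute)
  finally show ?thesis .
qed

lemma Eminus_norm2_le_supported:
  assumes "finite S" "\<And>u. u \<notin> S \<Longrightarrow> v u = 0" "finite A"
  shows "(\<Sum>a\<in>A. weight a * (cmod (Eminus \<alpha> p v (j, a)))\<^sup>2)
    \<le> real (card S) * (\<Sum>u\<in>S. (cmod (v u))\<^sup>2 * Eminus_norm2 \<alpha> (snd u) p)"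
proof -
  have "(\<Sum>a\<in>A. weight a * (cmod (Eminus \<alpha> p v (j, a)))\<^sup>2)
      = (\<Sum>a\<in>A. weight a * (cmod (\<Sum>u\<in>S. v u * Eminus \<alpha> p (basis u) (j, a)))\<^sup>2)"
    by (simp add: Eminus_expand[OF assms(1,2)])
  also have "\<dots> \<le> (\<Sum>a\<in>A. weight a * (real (card S) * (\<Sum>u\<in>S. (cmod (v u * Eminus \<alpha> p (basis u) (j, a)))\<^sup>2)))"
    by (intro sum_mono mult_left_mono norm_sum_squared_le weight_nonneg assms(1))
  also have "\<dots> = real (card S) * (\<Sum>u\<in>S. (cmod (v u))\<^sup>2 *
      (\<Sum>a\<in>A. weight a * (cmod (Eminus \<alpha> p (basis (fst u, snd u)) (j, a)))\<^sup>2))"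
    by (simp add: sum_distrib_left sum_distrib_right sum.swap[of _ S] algebra_simps norm_mult power_mult_distrib)
  also have "\<dots> \<le> real (card S) * (\<Sum>u\<in>S. (cmod (v u))\<^sup>2 * Eminus_norm2 \<alpha> (snd u) p)"
    by (intro mult_left_mono sum_mono Eminus_basis_norm2_le assms(3)) auto
  finally show ?thesis .
qed

lemma Eminus_norm2_term_add_mset:
  assumes "n > 0"
  shows "(cre_coef \<alpha> (\<rho> + {#n#}))\<^sup>2 * weight (\<nu> + (\<rho> + {#n#})) * (real n * real (count (\<rho> + {#n#}) n))
    = \<alpha>\<^sup>2 * (cre_coef \<alpha> \<rho>)\<^sup>2 * weight (\<nu> + \<rho>) *
      ((real (count \<nu> n) + real (count \<rho> n) + 1) / (real (count \<rho> n) + 1))"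
proof -
  have field: "(c * (\<alpha> / x) / y)\<^sup>2 * (w * x * (a + y)) * (x * y) = \<alpha>\<^sup>2 * c\<^sup>2 * w * ((a + y) / y)"
    if "x \<noteq> 0" "y \<noteq> 0" for x y c w a :: real
    using that by (simp add: field_simps power2_eq_square)
  have k: "real (count \<rho> n) + 1 \<noteq> 0" by (simp add: add_nonneg_eq_0_iff)
  have c: "cre_coef \<alpha> (\<rho> + {#n#}) = cre_coef \<alpha> \<rho> * (\<alpha> / real n) / (real (count \<rho> n) + 1)"
    by (rule expcoef_add_mset)
  have w: "weight (\<nu> + (\<rho> + {#n#})) =
      weight (\<nu> + \<rho>) * real n * (real (count \<nu> n) + real (count \<rho> n) + 1)"
    using weight_add_mset[of "\<nu> + \<rho>" n] by (simp add: add.assoc)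
  have e: "real (count (\<rho> + {#n#}) n) = real (count \<rho> n) + 1" by simp
  show ?thesis unfolding c w e
    using field[OF _ k, where x="real n" and c="cre_coef \<alpha> \<rho>" and w="weight (\<nu> + \<rho>)"
        and a="real (count \<nu> n)"] assms
    by (simp add: add.assoc mult.assoc)
qed

lemma sum_partitions_weighted_count:
  assumes "n > 0"
  shows "(\<Sum>\<rho>\<in>partitions p. (cre_coef \<alpha> \<rho>)\<^sup>2 * weight (\<nu> + \<rho>) * (real n * real (count \<rho> n))) =
    (if n \<le> p then (\<Sum>\<rho>\<in>partitions (p - n). \<alpha>\<^sup>2 * (cre_coef \<alpha> \<rho>)\<^sup>2 * weight (\<nu> + \<rho>) *
        ((real (count \<nu> n) + real (count \<rho> n) + 1) / (real (count \<rho> n) + 1))) else 0)"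
proof -
  let ?f = "\<lambda>\<rho>. (cre_coef \<alpha> \<rho>)\<^sup>2 * weight (\<nu> + \<rho>) * (real n * real (count \<rho> n))"
  have "(\<Sum>\<rho>\<in>partitions p. ?f \<rho>) = (\<Sum>\<rho>\<in>{\<rho>\<in>partitions p. n \<in># \<rho>}. ?f \<rho>)"
    by (rule sum.mono_neutral_right) (auto simp: finite_partitions count_eq_zero_iff)
  also have "\<dots> = (if n \<le> p then (\<Sum>\<rho>\<in>partitions (p - n). ?f (\<rho> + {#n#})) else 0)"
  proof (cases "n \<le> p")
    case False
    then have "{\<rho>\<in>partitions p. n \<in># \<rho>} = {}"
      by (auto simp: partitions_def dest: member_le_sum_mset)
    then show ?thesis using False by (simp only: sum.empty) simp
  next
    case True
    have "inj_on (\<lambda>\<rho>. \<rho> + {#n#}) (partitions (p - n))" by (auto intro: inj_onI)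
    then show ?thesis using True unfolding partitions_containing[OF assms True]
      by (simp add: sum.reindex comp_def)
  qed
  also have "\<dots> = (if n \<le> p then (\<Sum>\<rho>\<in>partitions (p - n). \<alpha>\<^sup>2 * (cre_coef \<alpha> \<rho>)\<^sup>2 * weight (\<nu> + \<rho>) *
        ((real (count \<nu> n) + real (count \<rho> n) + 1) / (real (count \<rho> n) + 1))) else 0)"
    by (simp only: Eminus_norm2_term_add_mset[OF assms])
  finally show ?thesis .
qed

text \<open>Summing \<open>sum_partitions_weighted_count\<close> over \<open>n\<close> gives \<open>p\<close> times the norm,
  because \<open>\<Sum>\<^sub>n n * count \<rho> n = |\<rho>| = p\<close>.\<close>

lemma Eminus_norm2_empty_recurrence: "real p * Eminus_norm2 \<alpha> {#} p = \<alpha>\<^sup>2 * (\<Sum>n\<in>{1..p}. Eminus_norm2 \<alpha> {#} (p - n))"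
proof -
  have sp: "real p = (\<Sum>n\<in>{1..p}. real n * real (count \<rho> n))" if "\<rho> \<in> partitions p" for \<rho>
  proof -
    have "x \<in># \<rho> \<Longrightarrow> 1 \<le> x \<and> x \<le> p" for x
      using that member_le_sum_mset[of x \<rho>] by (cases x) (auto simp: partitions_def)
    then have "set_mset \<rho> \<subseteq> {1..p}" by auto
    then have "sum_mset \<rho> = (\<Sum>n\<in>{1..p}. n * count \<rho> n)" by (intro sum_mset_eq_sum_count) auto
    then show ?thesis using that by (simp add: partitions_def flip: of_nat_mult of_nat_sum)
  qed
  have "real p * Eminus_norm2 \<alpha> {#} p = (\<Sum>\<rho>\<in>partitions p. (cre_coef \<alpha> \<rho>)\<^sup>2 * weight ({#} + \<rho>) * real p)"
    unfolding Eminus_norm2_def by (simp add: sum_distrib_left mult.commute)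
  also have "\<dots> = (\<Sum>\<rho>\<in>partitions p. \<Sum>n\<in>{1..p}. (cre_coef \<alpha> \<rho>)\<^sup>2 * weight ({#} + \<rho>) * (real n * real (count \<rho> n)))"
    by (rule sum.cong) (auto simp: sp sum_distrib_left)
  also have "\<dots> = (\<Sum>n\<in>{1..p}. \<Sum>\<rho>\<in>partitions p. (cre_coef \<alpha> \<rho>)\<^sup>2 * weight ({#} + \<rho>) * (real n * real (count \<rho> n)))"
    by (rule sum.swap)
  also have "\<dots> = (\<Sum>n\<in>{1..p}. \<alpha>\<^sup>2 * Eminus_norm2 \<alpha> {#} (p - n))"
  proof (rule sum.cong, simp)
    fix n assume n: "n \<in> {1..p}"
    then show "(\<Sum>\<rho>\<in>partitions p. (cre_coef \<alpha> \<rho>)\<^sup>2 * weight ({#} + \<rho>) * (real n * real (count \<rho> n))) = \<alpha>\<^sup>2 * Eminus_norm2 \<alpha> {#} (p - n)"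
      by (subst sum_partitions_weighted_count) (auto simp: Eminus_norm2_def sum_distrib_left mult.assoc)
  qed
  finally show ?thesis by (simp add: sum_distrib_left)
qed

lemma sum_partitions_weighted_count_le:
  assumes "n > 0"
  shows "(\<Sum>\<rho>\<in>partitions p. (cre_coef \<alpha> \<rho>)\<^sup>2 * weight (\<nu> + \<rho>) * (real n * real (count \<rho> n)))
    \<le> \<alpha>\<^sup>2 * (real (count \<nu> n) + 1) * Eminus_norm2 \<alpha> \<nu> (p - n)"
proof (cases "n \<le> p")
  case True
  let ?a = "real (count \<nu> n)"
  have "(\<Sum>\<rho>\<in>partitions p. (cre_coef \<alpha> \<rho>)\<^sup>2 * weight (\<nu> + \<rho>) * (real n * real (count \<rho> n)))
      = (\<Sum>\<rho>\<in>partitions (p - n). \<alpha>\<^sup>2 * (cre_coef \<alpha> \<rho>)\<^sup>2 * weight (\<nu> + \<rho>) *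
          ((?a + real (count \<rho> n) + 1) / (real (count \<rho> n) + 1)))"
    using True by (simp only: sum_partitions_weighted_count[OF assms] if_True)
  also have "\<dots> \<le> (\<Sum>\<rho>\<in>partitions (p - n). \<alpha>\<^sup>2 * (cre_coef \<alpha> \<rho>)\<^sup>2 * weight (\<nu> + \<rho>) * (?a + 1))"
    by (intro sum_mono mult_left_mono) (auto simp: divide_le_eq algebra_simps weight_nonneg)
  also have "\<dots> = \<alpha>\<^sup>2 * (?a + 1) * Eminus_norm2 \<alpha> \<nu> (p - n)"
    by (simp add: Eminus_norm2_def sum_distrib_left ac_simps)
  finally show ?thesis .
next
  case False
  then show ?thesis by (simp add: sum_partitions_weighted_count[OF assms] Eminus_norm2_nonneg)
qed

lemma Eminus_norm2_add_mset_le: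
  assumes "n > 0"
  shows "Eminus_norm2 \<alpha> (\<nu> + {#n#}) p \<le> real n * (real (count \<nu> n) + 1) * Eminus_norm2 \<alpha> \<nu> p
     + \<alpha>\<^sup>2 * (real (count \<nu> n) + 1) * Eminus_norm2 \<alpha> \<nu> (p - n)"
proof -
  let ?a = "real (count \<nu> n)"
  have "weight (\<nu> + {#n#} + \<rho>) = weight (\<nu> + \<rho>) * (real n * (?a + 1)) +
      weight (\<nu> + \<rho>) * (real n * real (count \<rho> n))" for \<rho>
    using weight_add_mset[of "\<nu> + \<rho>" n] by (simp add: ac_simps algebra_simps)
  then have "Eminus_norm2 \<alpha> (\<nu> + {#n#}) p = real n * (?a + 1) * Eminus_norm2 \<alpha> \<nu> p
      + (\<Sum>\<rho>\<in>partitions p. (cre_coef \<alpha> \<rho>)\<^sup>2 * weight (\<nu> + \<rho>) * (real n * real (count \<rho> n)))"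
    unfolding Eminus_norm2_def by (simp add: sum.distrib sum_distrib_left algebra_simps)
  then show ?thesis using sum_partitions_weighted_count_le[OF assms, of \<alpha> \<nu> p] by simp
qed

lemma Eminus_norm2_empty_0: "Eminus_norm2 \<alpha> {#} 0 = 1"
  by (simp add: Eminus_norm2_def partitions_0 expcoef_def weight_def)

lemma sum_diff_atLeast1_atMost:
  fixes f :: "nat \<Rightarrow> 'a::comm_monoid_add"
  shows "(\<Sum>n\<in>{1..p}. f (p - n)) = (\<Sum>i<p. f i)"
proof -
  have "(\<Sum>n\<in>{1..p}. f (p - n)) = (\<Sum>k<p. f (p - Suc k))"
    using sum.atLeast1_atMost_eq[of "\<lambda>n. f (p - n)" p] by simp
  also have "\<dots> = (\<Sum>i<p. f i)" by (rule sum.nat_diff_reindex)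
  finally show ?thesis .
qed

lemma Eminus_norm2_empty_Suc: "Eminus_norm2 \<alpha> {#} (Suc p) = Eminus_norm2 \<alpha> {#} p * (real p + \<alpha>\<^sup>2) / (real p + 1)"
proof -
  have a: "real (Suc p) * Eminus_norm2 \<alpha> {#} (Suc p) = \<alpha>\<^sup>2 * (\<Sum>i<Suc p. Eminus_norm2 \<alpha> {#} i)"
    using Eminus_norm2_empty_recurrence[of "Suc p" \<alpha>] sum_diff_atLeast1_atMost[of "Eminus_norm2 \<alpha> {#}" "Suc p"] by simp
  have b: "real p * Eminus_norm2 \<alpha> {#} p = \<alpha>\<^sup>2 * (\<Sum>i<p. Eminus_norm2 \<alpha> {#} i)"
    using Eminus_norm2_empty_recurrence[of p \<alpha>] sum_diff_atLeast1_atMost[of "Eminus_norm2 \<alpha> {#}" p] by simp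
  have "real (Suc p) * Eminus_norm2 \<alpha> {#} (Suc p) = real p * Eminus_norm2 \<alpha> {#} p + \<alpha>\<^sup>2 * Eminus_norm2 \<alpha> {#} p"
    using a b by (simp add: algebra_simps)
  then show ?thesis by (simp add: field_simps)
qed

lemma Eminus_norm2_empty_le_exp_harm:
  assumes "\<alpha>\<^sup>2 \<le> 1"
  shows "Eminus_norm2 \<alpha> {#} p \<le> exp (- (1 - \<alpha>\<^sup>2) * harm p)"
proof (induction p)
  case 0 then show ?case by (simp add: Eminus_norm2_empty_0 harm_def)
next
  case (Suc p)
  let ?b = "1 - \<alpha>\<^sup>2"
  have fac: "(real p + \<alpha>\<^sup>2) / (real p + 1) = 1 + (- ?b / (real p + 1))"
    by (simp add: field_simps)
  have f0: "0 \<le> (real p + \<alpha>\<^sup>2) / (real p + 1)" by simp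
  have f1: "(real p + \<alpha>\<^sup>2) / (real p + 1) \<le> exp (- ?b / (real p + 1))"
    unfolding fac by (rule exp_ge_add_one_self)
  have "Eminus_norm2 \<alpha> {#} (Suc p) = Eminus_norm2 \<alpha> {#} p * ((real p + \<alpha>\<^sup>2) / (real p + 1))"
    by (simp add: Eminus_norm2_empty_Suc)
  also have "\<dots> \<le> exp (- ?b * harm p) * exp (- ?b / (real p + 1))"
    by (rule mult_mono[OF Suc.IH f1]) (simp_all add: f0)
  also have "\<dots> = exp (- ?b * harm (Suc p))"
    by (simp add: harm_Suc exp_add[symmetric] field_simps)
  finally show ?case .
qed

lemma Eminus_norm2_empty_le_powr:
  assumes "\<alpha>\<^sup>2 \<le> 1"
  shows "Eminus_norm2 \<alpha> {#} p \<le> (real p + 1) powr (- (1 - \<alpha>\<^sup>2))"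
proof -
  have "Eminus_norm2 \<alpha> {#} p \<le> exp (- (1 - \<alpha>\<^sup>2) * harm p)" by (rule Eminus_norm2_empty_le_exp_harm[OF assms])
  also have "\<dots> \<le> exp (- (1 - \<alpha>\<^sup>2) * ln (real p + 1))"
    using assms ln_le_harm[of p] by (intro exp_le_cancel_iff[THEN iffD2] mult_left_mono_neg) auto
  also have "\<dots> = (real p + 1) powr (- (1 - \<alpha>\<^sup>2))"
    by (simp add: powr_def mult.commute)
  finally show ?thesis .
qed

lemma sq_summable_Eminus_norm2_empty:
  assumes "\<alpha>\<^sup>2 < 1/2"
  shows "sq_summable (Eminus_norm2 \<alpha> {#})"
proof -
  have s: "summable (\<lambda>p. real p powr (- 2 * (1 - \<alpha>\<^sup>2)))"
    using assms by (subst summable_real_powr_iff) simp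
  have "summable (\<lambda>p. (real p + 1) powr (- 2 * (1 - \<alpha>\<^sup>2)))"
    using s summable_Suc_iff[of "\<lambda>p. real p powr (- 2 * (1 - \<alpha>\<^sup>2))"] by (simp add: add.commute)
  moreover have "((real p + 1) powr (- (1 - \<alpha>\<^sup>2)))\<^sup>2 = (real p + 1) powr (- 2 * (1 - \<alpha>\<^sup>2))" for p
    using powr_power[of "real p + 1" "- (1 - \<alpha>\<^sup>2)" 2] by simp
  ultimately have "sq_summable (\<lambda>p. (real p + 1) powr (- (1 - \<alpha>\<^sup>2)))"
    unfolding sq_summable_def by simp
  then show ?thesis
  proof (rule sq_summable_mono)
    fix n show "0 \<le> Eminus_norm2 \<alpha> {#} n" by (rule Eminus_norm2_nonneg)
    show "Eminus_norm2 \<alpha> {#} n \<le> (real n + 1) powr (- (1 - \<alpha>\<^sup>2))"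
      by (rule Eminus_norm2_empty_le_powr) (use assms in simp)
  qed
qed

lemma Eminus_norm2_zero_part: "Eminus_norm2 \<alpha> (add_mset 0 \<nu>) p = 0"
  unfolding Eminus_norm2_def
proof (rule sum.neutral, rule ballI)
  fix \<rho>
  have "weight (add_mset 0 \<nu> + \<rho>) = weight ((\<nu> + \<rho>) + {#0#})" by simp
  also have "\<dots> = 0" by (simp only: weight_add_mset)
  finally show "(cre_coef \<alpha> \<rho>)\<^sup>2 * weight (add_mset 0 \<nu> + \<rho>) = 0" by simp
qed

lemma sq_summable_Eminus_norm2:
  assumes "\<alpha>\<^sup>2 < 1/2"
  shows "sq_summable (Eminus_norm2 \<alpha> \<nu>)"
proof (induction \<nu>)
  case empty then show ?case by (rule sq_summable_Eminus_norm2_empty[OF assms])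
next
  case (add n \<nu>)
  show ?case
  proof (cases "n = 0")
    case True
    then show ?thesis by (simp add: Eminus_norm2_zero_part sq_summable_def)
  next
    case False
    have "sq_summable (\<lambda>p. real n * (real (count \<nu> n) + 1) * Eminus_norm2 \<alpha> \<nu> p
     + \<alpha>\<^sup>2 * (real (count \<nu> n) + 1) * Eminus_norm2 \<alpha> \<nu> (p - n))"
      using add.IH by (intro sq_summable_add sq_summable_cmult sq_summable_shift)
    then show ?thesis
      by (rule sq_summable_mono) (use Eminus_norm2_add_mset_le[of n \<alpha> \<nu>] False Eminus_norm2_nonneg in auto)
  qed
qed

definition Eminus_degree :: "real \<Rightarrow> int \<Rightarrow> int \<Rightarrow> real \<Rightarrow> nat \<Rightarrow> real" where
  "Eminus_degree \<alpha>0 k j t q = real q - t - (of_int k * \<alpha>0)\<^sup>2 / 2 - of_int k * \<alpha>0 * (of_int j * \<alpha>0)"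

definition Y_index :: "real \<Rightarrow> int \<Rightarrow> int \<Rightarrow> nat multiset \<Rightarrow> nat \<Rightarrow> real" where
  "Y_index \<alpha>0 k j lam n = real (sum_mset lam) - real n - (of_int k * \<alpha>0)\<^sup>2 / 2 - of_int k * \<alpha>0 * (of_int j * \<alpha>0)"

lemma Ybasis_apply:
  "Ybasis \<alpha>0 k t (j, lam) (j', a) = (\<Sum>q\<in>{0..sum_mset lam}. if Eminus_degree \<alpha>0 k j t q \<in> \<nat> then
     Eminus (of_int k * \<alpha>0) (nat \<lfloor>Eminus_degree \<alpha>0 k j t q\<rfloor>) (Eplus (of_int k * \<alpha>0) q (basis (j, lam))) (j' - k, a) else 0)"
  unfolding Eminus_degree_def by (simp add: Ybasis_def cshift_def Let_def)

lemma Ybasis_nonzero: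
  assumes "Ybasis \<alpha>0 k t (j, lam) (j', a) \<noteq> 0"
  shows "j' = j + k \<and> t = Y_index \<alpha>0 k j lam (sum_mset a)"
proof -
  let ?\<alpha> = "of_int k * \<alpha>0"
  obtain q where "q \<in> {0..sum_mset lam}" "(if Eminus_degree \<alpha>0 k j t q \<in> \<nat> then
     Eminus ?\<alpha> (nat \<lfloor>Eminus_degree \<alpha>0 k j t q\<rfloor>) (Eplus ?\<alpha> q (basis (j, lam))) (j' - k, a) else 0) \<noteq> 0"
    using assms unfolding Ybasis_apply by (rule sum.not_neutral_contains_not_neutral)
  then have q: "q \<le> sum_mset lam" "Eminus_degree \<alpha>0 k j t q \<in> \<nat>"
    "Eminus ?\<alpha> (nat \<lfloor>Eminus_degree \<alpha>0 k j t q\<rfloor>) (Eplus ?\<alpha> q (basis (j, lam))) (j' - k, a) \<noteq> 0"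
    by (auto split: if_splits)
  obtain m where m: "Eminus_degree \<alpha>0 k j t q = real m" using q(2) by (auto elim: Nats_cases)
  have "homogeneous (sum_mset lam - q) j (Eplus ?\<alpha> q (basis (j, lam)))"
    by (rule homogeneous_Eplus[OF homogeneous_basis])
  from Eminus_nonzero_degree[OF this q(3)] m
  have "j' - k = j" "sum_mset a = sum_mset lam - q + m" by simp_all
  then show ?thesis using m q(1) unfolding Eminus_degree_def Y_index_def
    by (simp add: of_nat_diff algebra_simps)
qed

lemma real_add_diff_in_Nats_iff:
  "(real q + real n - real L \<in> \<nat> \<longleftrightarrow> L \<le> n + q) \<and>
   (L \<le> n + q \<longrightarrow> nat \<lfloor>real q + real n - real L\<rfloor> = n + q - L)"
proof (cases "L \<le> n + q")
  case True
  then have e: "real q + real n - real L = real (n + q - L)" by (simp add: of_nat_diff)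
  show ?thesis unfolding e using True by (simp only: floor_of_nat nat_int of_nat_in_Nats simp_thms)
next
  case False
  then have "real q + real n - real L < 0" by simp
  then have "real q + real n - real L \<notin> \<nat>" by (auto elim: Nats_cases)
  then show ?thesis using False by simp
qed

lemma Ybasis_at_Y_index:
  "Ybasis \<alpha>0 k (Y_index \<alpha>0 k j lam n) (j, lam) (j + k, a) = (\<Sum>q\<in>{0..sum_mset lam}.
     if sum_mset lam \<le> n + q then
       Eminus (of_int k * \<alpha>0) (n + q - sum_mset lam) (Eplus (of_int k * \<alpha>0) q (basis (j, lam))) (j, a)
     else 0)"
  unfolding Ybasis_apply
proof (rule sum.cong, simp)
  fix q
  have "Eminus_degree \<alpha>0 k j (Y_index \<alpha>0 k j lam n) q = real q + real n - real (sum_mset lam)"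
    unfolding Eminus_degree_def Y_index_def by simp
  then show "(if Eminus_degree \<alpha>0 k j (Y_index \<alpha>0 k j lam n) q \<in> \<nat> then
        Eminus (of_int k * \<alpha>0) (nat \<lfloor>Eminus_degree \<alpha>0 k j (Y_index \<alpha>0 k j lam n) q\<rfloor>)
          (Eplus (of_int k * \<alpha>0) q (basis (j, lam))) (j + k - k, a) else 0) =
      (if sum_mset lam \<le> n + q then Eminus (of_int k * \<alpha>0) (n + q - sum_mset lam)
          (Eplus (of_int k * \<alpha>0) q (basis (j, lam))) (j, a) else 0)"
    using real_add_diff_in_Nats_iff[where L="sum_mset lam" and n=n and q=q] by simp
qed

text \<open>With \<open>\<alpha> = k \<alpha>0\<close> and \<open>t = Y_index \<alpha>0 k j lam n\<close>, \<open>Y_norm2 \<alpha>0 k j lam n\<close> is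
  \<open>\<parallel>Y(\<alpha>,t) e(j,lam)\<parallel>\<^sup>2\<close>, since that vector lies in degree \<open>n\<close>.\<close>

definition Y_norm2 :: "real \<Rightarrow> int \<Rightarrow> int \<Rightarrow> nat multiset \<Rightarrow> nat \<Rightarrow> real" where
  "Y_norm2 \<alpha>0 k j lam n = (\<Sum>a\<in>partitions n.
     weight a * (cmod (Ybasis \<alpha>0 k (Y_index \<alpha>0 k j lam n) (j, lam) (j + k, a)))\<^sup>2)"

lemma Y_norm2_nonneg: "Y_norm2 \<alpha>0 k j lam n \<ge> 0"
  unfolding Y_norm2_def by (intro sum_nonneg mult_nonneg_nonneg weight_nonneg) auto

lemma sq_summable_Y_norm2:
  assumes "(of_int k * \<alpha>0)\<^sup>2 < 1/2"
  shows "sq_summable (Y_norm2 \<alpha>0 k j lam)"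
proof -
  define \<alpha> where "\<alpha> = of_int k * \<alpha>0"
  define L where "L = sum_mset lam"
  define Q where "Q = {0..L}"
  define v where "v q = Eplus \<alpha> q (basis (j, lam))" for q
  define S where "S q = {u. v q u \<noteq> 0}" for q
  have fS: "finite (S q)" for q
    using homogeneous_Eplus[OF homogeneous_basis[of lam j], where \<alpha>=\<alpha> and q=q]
    unfolding homogeneous_def S_def v_def by blast
  define G where "G n = real (card Q) * (\<Sum>q\<in>Q. real (card (S q)) * (\<Sum>u\<in>S q. (cmod (v q u))\<^sup>2 *
      (if L \<le> n + q then Eminus_norm2 \<alpha> (snd u) (n + q - L) else 0)))" for n
  have "\<alpha>\<^sup>2 < 1/2" using assms by (simp add: \<alpha>_def)
  then have "sq_summable G" unfolding G_def
    by (intro sq_summable_cmult sq_summable_sum fS sq_summable_shift_if sq_summable_Eminus_norm2)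
      (auto simp: Q_def)
  moreover have "Y_norm2 \<alpha>0 k j lam n \<le> G n" for n
  proof -
    define z where "z q a = (if L \<le> n + q then Eminus \<alpha> (n + q - L) (v q) (j, a) else 0)" for q a
    have "Ybasis \<alpha>0 k (Y_index \<alpha>0 k j lam n) (j, lam) (j + k, a) = (\<Sum>q\<in>Q. z q a)" for a
      unfolding Ybasis_at_Y_index z_def Q_def L_def v_def \<alpha>_def ..
    then have "Y_norm2 \<alpha>0 k j lam n = (\<Sum>a\<in>partitions n. weight a * (cmod (\<Sum>q\<in>Q. z q a))\<^sup>2)"
      unfolding Y_norm2_def by simp
    also have "\<dots> \<le> (\<Sum>a\<in>partitions n. weight a * (real (card Q) * (\<Sum>q\<in>Q. (cmod (z q a))\<^sup>2)))"
      by (intro sum_mono mult_left_mono norm_sum_squared_le weight_nonneg) (auto simp: Q_def)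
    also have "\<dots> = real (card Q) * (\<Sum>q\<in>Q. \<Sum>a\<in>partitions n. weight a * (cmod (z q a))\<^sup>2)"
      by (simp add: sum_distrib_left sum_distrib_right sum.swap[of _ Q] algebra_simps)
    also have "\<dots> \<le> G n"
      unfolding G_def
    proof (intro mult_left_mono sum_mono)
      fix q
      have "\<And>u. u \<notin> S q \<Longrightarrow> v q u = 0" by (simp add: S_def)
      from Eminus_norm2_le_supported[where v="v q", OF fS[of q] this finite_partitions]
      show "(\<Sum>a\<in>partitions n. weight a * (cmod (z q a))\<^sup>2) \<le> real (card (S q)) *
          (\<Sum>u\<in>S q. (cmod (v q u))\<^sup>2 * (if L \<le> n + q then Eminus_norm2 \<alpha> (snd u) (n + q - L) else 0))"
        by (cases "L \<le> n + q") (simp_all add: z_def)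
    qed simp
    finally show ?thesis .
  qed
  ultimately show ?thesis by (rule sq_summable_mono[OF _ Y_norm2_nonneg])
qed

section \<open>Norm convergence of dominated series\<close>

lemma tweight_nonneg: "tweight X \<ge> 0"
  unfolding tweight_def by (auto split: prod.splits intro!: mult_nonneg_nonneg weight_nonneg)

lemma infsum_eq_sum_supported:
  fixes f :: "'a \<Rightarrow> 'b::{comm_monoid_add, t2_space}"
  assumes "finite T" "\<And>t. t \<notin> T \<Longrightarrow> f t = 0"
  shows "infsum f UNIV = sum f T"
proof -
  have "infsum f UNIV = infsum f T" by (rule infsum_cong_neutral) (use assms in auto)
  then show ?thesis using assms(1) by simp
qed

lemma summable_on_finite_support:
  fixes f :: "'a \<Rightarrow> 'b::{comm_monoid_add, topological_space}"
  assumes "finite {t. f t \<noteq> 0}"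
  shows "f summable_on UNIV"
proof -
  have "f summable_on UNIV \<longleftrightarrow> f summable_on {t. f t \<noteq> 0}"
    by (rule summable_on_cong_neutral) auto
  then show ?thesis using assms by simp
qed

lemma infsum_tail_less:
  fixes h :: "'a \<Rightarrow> real"
  assumes "h summable_on UNIV" "e > 0"
  shows "\<exists>G. finite G \<and> infsum h (UNIV - G) < e"
proof -
  obtain G where G: "finite G" "dist (sum h G) (infsum h UNIV) < e"
    using infsum_finite_approximation[OF assms(1), of "e / 2"] assms(2) by auto
  have "infsum h (UNIV - G) = infsum h UNIV - sum h G"
    using infsum_Diff[OF assms(1), of G] G(1) by simp
  then show ?thesis using G by (auto simp: dist_real_def)
qed

lemma infsum_le_infsum_outside:
  fixes h k :: "'a \<Rightarrow> real"
  assumes "h summable_on UNIV" "\<And>x. 0 \<le> k x" "\<And>x. k x \<le> h x" "\<And>x. x \<in> G \<Longrightarrow> k x = 0"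
  shows "infsum k UNIV \<le> infsum h (UNIV - G)"
proof -
  have h: "h summable_on (UNIV - G)" using assms(1) by (rule summable_on_subset_banach) simp
  have k: "k summable_on (UNIV - G)"
    by (rule summable_on_comparison_test[OF h]) (use assms(2,3) in auto)
  have "infsum k UNIV = infsum k (UNIV - G)"
    by (rule infsum_cong_neutral) (use assms(4) in auto)
  also have "\<dots> \<le> infsum h (UNIV - G)" by (rule infsum_mono[OF k h assms(3)])
  finally show ?thesis .
qed

definition dominated_series :: "(real \<Rightarrow> tvec) \<Rightarrow> bool" where
  "dominated_series v \<longleftrightarrow> (\<forall>X. finite {t. v t X \<noteq> 0}) \<and>
     (\<exists>g. (\<forall>X. (\<Sum>t\<in>{t. v t X \<noteq> 0}. cmod (v t X)) \<le> g X) \<and> (\<lambda>X. tweight X * (g X)\<^sup>2) summable_on UNIV)"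

lemma norm_sum_diff_infsum_le:
  fixes f :: "'a \<Rightarrow> complex"
  assumes "finite {t. f t \<noteq> 0}" "finite F"
  shows "cmod ((\<Sum>t\<in>F. f t) - infsum f UNIV) \<le> (\<Sum>t\<in>{t. f t \<noteq> 0} - F. cmod (f t))"
proof -
  let ?T = "{t. f t \<noteq> 0}"
  have "(\<Sum>t\<in>F. f t) = (\<Sum>t\<in>?T \<inter> F. f t)"
    by (rule sum.mono_neutral_right) (use assms in auto)
  moreover have "infsum f UNIV = sum f ?T" by (rule infsum_eq_sum_supported[OF assms(1)]) simp
  then have "infsum f UNIV = (\<Sum>t\<in>?T \<inter> F. f t) + (\<Sum>t\<in>?T - F. f t)"
    by (simp add: sum.Int_Diff[OF assms(1)])
  ultimately have eq: "(\<Sum>t\<in>F. f t) - infsum f UNIV = - (\<Sum>t\<in>?T - F. f t)" by simp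
  show ?thesis unfolding eq norm_minus_cancel by (rule norm_sum)
qed

lemma norm_conv_dominated_series:
  assumes "dominated_series v"
  shows "norm_conv v (\<lambda>X. infsum (\<lambda>t. v t X) UNIV)"
proof -
  define T where "T X = {t. v t X \<noteq> 0}" for X
  have fT: "finite (T X)" for X using assms unfolding dominated_series_def T_def by blast
  obtain g where gb: "\<And>X. (\<Sum>t\<in>T X. cmod (v t X)) \<le> g X"
    and hs: "(\<lambda>X. tweight X * (g X)\<^sup>2) summable_on UNIV"
    using assms unfolding dominated_series_def T_def by blast
  define h where "h X = tweight X * (g X)\<^sup>2" for X
  define L where "L X = infsum (\<lambda>t. v t X) UNIV" for X
  have sq_le: "tweight X * (cmod z)\<^sup>2 \<le> h X" if "cmod z \<le> g X" for X z
    unfolding h_def by (intro mult_left_mono power_mono tweight_nonneg) (use that in auto)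
  have "cmod (L X) \<le> g X" for X
    using norm_sum_diff_infsum_le[of "\<lambda>t. v t X" "{}"] fT[of X] gb[of X] by (simp add: L_def T_def)
  then have in_L: "in_tspace L"
    unfolding in_tspace_def
    by (intro summable_on_comparison_test[OF hs[folded h_def]] sq_le) (auto simp: tweight_nonneg)
  have "\<forall>\<^sub>F F in finite_subsets_at_top UNIV. dist (tdist (\<lambda>x. \<Sum>t\<in>F. v t x) L) 0 < \<epsilon>"
    if \<epsilon>: "\<epsilon> > 0" for \<epsilon>
  proof -
    obtain G where G: "finite G" "infsum h (UNIV - G) < \<epsilon>\<^sup>2"
      using infsum_tail_less[OF hs[folded h_def], of "\<epsilon>\<^sup>2"] \<epsilon> by auto
    show ?thesis
      unfolding eventually_finite_subsets_at_top
    proof (intro exI[of _ "\<Union>X\<in>G. T X"] conjI allI impI)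
      fix F assume F: "finite F \<and> (\<Union>X\<in>G. T X) \<subseteq> F \<and> F \<subseteq> UNIV"
      define e where "e X = (\<Sum>t\<in>F. v t X) - L X" for X
      have e: "cmod (e X) \<le> (\<Sum>t\<in>T X - F. cmod (v t X))" for X
        using norm_sum_diff_infsum_le[of "\<lambda>t. v t X" F] fT[of X] F by (simp add: e_def L_def T_def)
      have "cmod (e X) \<le> g X" for X
      proof -
        have "(\<Sum>t\<in>T X - F. cmod (v t X)) \<le> (\<Sum>t\<in>T X. cmod (v t X))" by (rule sum_mono2[OF fT]) auto
        then show ?thesis using e[of X] gb[of X] by linarith
      qed
      moreover have "e X = 0" if "X \<in> G" for X
      proof -
        have "T X - F = {}" using that F by auto
        then show ?thesis using e[of X] by (simp only: sum.empty norm_le_zero_iff)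
      qed
      ultimately have "infsum (\<lambda>X. tweight X * (cmod (e X))\<^sup>2) UNIV \<le> infsum h (UNIV - G)"
        by (intro infsum_le_infsum_outside[OF hs[folded h_def]] sq_le) (auto simp: tweight_nonneg)
      then have "tdist (\<lambda>x. \<Sum>t\<in>F. v t x) L < sqrt (\<epsilon>\<^sup>2)"
        unfolding tdist_def e_def using G(2) by (simp only: real_sqrt_less_iff)
      moreover have "0 \<le> tdist (\<lambda>x. \<Sum>t\<in>F. v t x) L" unfolding tdist_def
        by (intro real_sqrt_ge_zero infsum_nonneg mult_nonneg_nonneg tweight_nonneg) simp
      ultimately show "dist (tdist (\<lambda>x. \<Sum>t\<in>F. v t x) L) 0 < \<epsilon>" using \<epsilon> by simp
    qed (use G(1) fT in auto)
  qed
  then show ?thesis unfolding norm_conv_def L_def[symmetric] using in_L by (auto intro: tendstoI)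
qed

lemma sum_norm_support_eq:
  fixes f :: "'a \<Rightarrow> complex"
  assumes "finite A" "{t. f t \<noteq> 0} \<subseteq> A"
  shows "(\<Sum>t\<in>{t. f t \<noteq> 0}. cmod (f t)) = (\<Sum>t\<in>A. cmod (f t))"
  by (rule sum.mono_neutral_left) (use assms in auto)

lemma dominated_series_add:
  assumes "dominated_series v" "dominated_series w"
  shows "dominated_series (\<lambda>t X. v t X + w t X)"
proof -
  obtain g1 where fv: "\<And>X. finite {t. v t X \<noteq> 0}"
    and g1: "\<And>X. (\<Sum>t\<in>{t. v t X \<noteq> 0}. cmod (v t X)) \<le> g1 X" "(\<lambda>X. tweight X * (g1 X)\<^sup>2) summable_on UNIV"
    using assms(1) unfolding dominated_series_def by blast
  obtain g2 where fw: "\<And>X. finite {t. w t X \<noteq> 0}"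
    and g2: "\<And>X. (\<Sum>t\<in>{t. w t X \<noteq> 0}. cmod (w t X)) \<le> g2 X" "(\<lambda>X. tweight X * (g2 X)\<^sup>2) summable_on UNIV"
    using assms(2) unfolding dominated_series_def by blast
  define A where "A X = {t. v t X \<noteq> 0} \<union> {t. w t X \<noteq> 0}" for X
  have A: "finite (A X)" for X unfolding A_def using fv fw by blast
  have sub: "{t. v t X + w t X \<noteq> 0} \<subseteq> A X" for X unfolding A_def by auto
  have bound: "(\<Sum>t\<in>{t. v t X + w t X \<noteq> 0}. cmod (v t X + w t X)) \<le> g1 X + g2 X" for X
  proof -
    have "(\<Sum>t\<in>{t. v t X + w t X \<noteq> 0}. cmod (v t X + w t X)) \<le> (\<Sum>t\<in>A X. cmod (v t X) + cmod (w t X))"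
      unfolding sum_norm_support_eq[OF A sub] by (intro sum_mono norm_triangle_ineq)
    also have "\<dots> = (\<Sum>t\<in>{t. v t X \<noteq> 0}. cmod (v t X)) + (\<Sum>t\<in>{t. w t X \<noteq> 0}. cmod (w t X))"
      unfolding sum.distrib by (subst (1 2) sum_norm_support_eq[OF A]) (auto simp: A_def)
    finally show ?thesis using g1(1)[of X] g2(1)[of X] by linarith
  qed
  have summable: "(\<lambda>X. tweight X * (g1 X + g2 X)\<^sup>2) summable_on UNIV"
  proof (rule summable_on_comparison_test)
    show "(\<lambda>X. 2 * (tweight X * (g1 X)\<^sup>2) + 2 * (tweight X * (g2 X)\<^sup>2)) summable_on UNIV"
      by (intro summable_on_add summable_on_cmult_right g1(2) g2(2))
    fix X
    have "(g1 X + g2 X)\<^sup>2 \<le> 2 * (g1 X)\<^sup>2 + 2 * (g2 X)\<^sup>2"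
      using sum_squares_bound[of "g1 X" "g2 X"] by (simp add: power2_sum)
    from mult_left_mono[OF this tweight_nonneg[of X]]
    show "tweight X * (g1 X + g2 X)\<^sup>2 \<le> 2 * (tweight X * (g1 X)\<^sup>2) + 2 * (tweight X * (g2 X)\<^sup>2)"
      by (simp add: algebra_simps)
  qed (simp add: tweight_nonneg)
  have "finite {t. v t X + w t X \<noteq> 0}" for X by (rule finite_subset[OF sub A])
  then show ?thesis unfolding dominated_series_def
    by (intro conjI allI exI[of _ "\<lambda>X. g1 X + g2 X"] bound summable)
qed

section \<open>The envelope of \<open>Y(\<alpha>,t) \<otimes> Y(\<alpha>,t - s)\<close> on a basis tensor\<close>

definition level :: "tidx \<Rightarrow> nat" where
  "level X = sum_mset (snd (fst X))"

lemma weight_nonzero_no_zero_part: "weight a \<noteq> 0 \<Longrightarrow> 0 \<notin># a"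
  unfolding weight_def by (auto simp: count_eq_zero_iff)

lemma summable_on_level_blocks:
  fixes f :: "'a \<Rightarrow> real" and B :: "nat \<Rightarrow> 'a set" and lev :: "'a \<Rightarrow> nat"
  assumes "\<And>x. 0 \<le> f x" "\<And>n. finite (B n)" "disjoint_family B"
    and "\<And>x. f x \<noteq> 0 \<Longrightarrow> x \<in> B (lev x)" "summable (\<lambda>n. sum f (B n))"
  shows "f summable_on UNIV"
proof (rule nonneg_bdd_above_summable_on)
  show "bdd_above (sum f ` {F. F \<subseteq> UNIV \<and> finite F})"
  proof (rule bdd_aboveI2)
    fix F :: "'a set" assume "F \<in> {F. F \<subseteq> UNIV \<and> finite F}"
    then have fF: "finite F" by simp
    define N where "N = Max (insert 0 (lev ` F))"
    have sub: "{x\<in>F. f x \<noteq> 0} \<subseteq> (\<Union>n\<in>{..N}. B n)"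
      using assms(4) fF by (fastforce simp: N_def intro: Max_ge)
    have "sum f F = sum f {x\<in>F. f x \<noteq> 0}"
      by (rule sum.mono_neutral_right) (use fF in auto)
    also have "\<dots> \<le> sum f (\<Union>n\<in>{..N}. B n)"
      by (rule sum_mono2[OF _ sub]) (auto simp: assms(1,2))
    also have "\<dots> = (\<Sum>n\<in>{..N}. sum f (B n))"
      using assms(3) by (intro sum.UNION_disjoint) (auto simp: assms(2) disjoint_family_on_def)
    also have "\<dots> \<le> (\<Sum>n. sum f (B n))"
      by (rule sum_le_suminf[OF assms(5)]) (auto intro: sum_nonneg assms(1))
    finally show "sum f F \<le> (\<Sum>n. sum f (B n))" .
  qed
qed (rule assms(1))


context
  fixes \<alpha>0 :: real and k j s :: int and lam mu :: "nat multiset"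
begin

definition level_shift :: int where
  "level_shift = int (sum_mset mu) - int (sum_mset lam) + s"

text \<open>\<open>envelope X\<close> is the weighted square of the coordinate \<open>X\<close> of
  \<open>(Y(\<alpha>,t) \<otimes> Y(\<alpha>,t - s)) (e(j,lam) \<otimes> e(j,mu))\<close> for \<open>t = Y_index \<alpha>0 k j lam (level X)\<close>,
  the only \<open>t\<close> for which this coordinate can be nonzero.\<close>

definition envelope :: "tidx \<Rightarrow> real" where
  "envelope X = tweight X *
     (cmod (Ybasis \<alpha>0 k (Y_index \<alpha>0 k j lam (level X)) (j, lam) (fst X)) *
      cmod (Ybasis \<alpha>0 k (Y_index \<alpha>0 k j lam (level X) - of_int s) (j, mu) (snd X)))\<^sup>2"

definition shifted_Y_norm2 :: "nat \<Rightarrow> real" where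
  "shifted_Y_norm2 n = (if nat (- level_shift) \<le> n + nat level_shift
     then Y_norm2 \<alpha>0 k j mu (n + nat level_shift - nat (- level_shift)) else 0)"

definition level_block :: "nat \<Rightarrow> tidx set" where
  "level_block n = (\<lambda>(a, b). ((j + k, a), (j + k, b))) `
     (partitions n \<times> (if 0 \<le> int n + level_shift then partitions (nat (int n + level_shift)) else {}))"

lemma Y_index_shift:
  assumes "0 \<le> int n + level_shift"
  shows "Y_index \<alpha>0 k j lam n - of_int s = Y_index \<alpha>0 k j mu (nat (int n + level_shift))"
proof -
  have "real (nat (int n + level_shift)) = real n + real (sum_mset mu) - real (sum_mset lam) + of_int s"
    using assms unfolding level_shift_def by (simp add: of_nat_nat del: of_nat_sum_mset)
  then show ?thesis unfolding Y_index_def by (simp add: algebra_simps)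
qed

lemma envelope_in_level_block:
  assumes "envelope X \<noteq> 0"
  shows "X \<in> level_block (level X)"
proof -
  obtain j1 a j2 b where X: "X = ((j1, a), (j2, b))" by (metis prod.collapse)
  from assms have tw: "tweight X \<noteq> 0"
    and y1: "Ybasis \<alpha>0 k (Y_index \<alpha>0 k j lam (level X)) (j, lam) (j1, a) \<noteq> 0"
    and y2: "Ybasis \<alpha>0 k (Y_index \<alpha>0 k j lam (level X) - of_int s) (j, mu) (j2, b) \<noteq> 0"
    unfolding envelope_def X by auto
  have a0: "0 \<notin># a" and b0: "0 \<notin># b"
    using tw weight_nonzero_no_zero_part unfolding X tweight_def by auto
  have j1: "j1 = j + k" using Ybasis_nonzero[OF y1] by simp
  have j2: "j2 = j + k"
    and "Y_index \<alpha>0 k j lam (sum_mset a) - of_int s = Y_index \<alpha>0 k j mu (sum_mset b)"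
    using Ybasis_nonzero[OF y2] unfolding X level_def by auto
  then have "real (sum_mset b) = real (sum_mset a) + real (sum_mset mu) - real (sum_mset lam) + of_int s"
    unfolding Y_index_def by (simp add: algebra_simps)
  then have "int (sum_mset b) = int (sum_mset a) + level_shift" unfolding level_shift_def by linarith
  then have c0: "0 \<le> int (sum_mset a) + level_shift"
    and "sum_mset b = nat (int (sum_mset a) + level_shift)" by (auto simp del: of_nat_sum_mset)
  then have "(a, b) \<in> partitions (sum_mset a) \<times> partitions (nat (int (sum_mset a) + level_shift))"
    using a0 b0 by (simp add: partitions_def)
  then show ?thesis unfolding level_block_def X level_def using j1 j2 c0
    by (auto intro!: image_eqI[of _ _ "(a,b)"])
qed

lemma sum_level_block_envelope:
  "(\<Sum>X\<in>level_block n. envelope X) = Y_norm2 \<alpha>0 k j lam n * shifted_Y_norm2 n"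
proof (cases "0 \<le> int n + level_shift")
  case False
  then show ?thesis unfolding level_block_def shifted_Y_norm2_def by auto
next
  case True
  define m where "m = nat (int n + level_shift)"
  have inj: "inj_on (\<lambda>(a, b). ((j + k, a), (j + k, b))) (partitions n \<times> partitions m)"
    by (auto intro: inj_onI)
  have B: "level_block n = (\<lambda>(a, b). ((j + k, a), (j + k, b))) ` (partitions n \<times> partitions m)"
    using True by (simp add: level_block_def m_def)
  have "(\<Sum>X\<in>level_block n. envelope X)
      = (\<Sum>(a, b)\<in>partitions n \<times> partitions m. envelope ((j + k, a), (j + k, b)))"
    unfolding B by (subst sum.reindex[OF inj]) (simp add: case_prod_beta comp_def)
  also have "\<dots> = (\<Sum>a\<in>partitions n. \<Sum>b\<in>partitions m.
      (weight a * (cmod (Ybasis \<alpha>0 k (Y_index \<alpha>0 k j lam n) (j, lam) (j + k, a)))\<^sup>2) *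
      (weight b * (cmod (Ybasis \<alpha>0 k (Y_index \<alpha>0 k j mu m) (j, mu) (j + k, b)))\<^sup>2))"
    unfolding sum.cartesian_product[symmetric]
  proof (intro sum.cong refl)
    fix a b assume "a \<in> partitions n" "b \<in> partitions m"
    then have "level ((j + k, a), (j + k, b)) = n" by (simp add: level_def partitions_def)
    then show "envelope ((j + k, a), (j + k, b)) =
      (weight a * (cmod (Ybasis \<alpha>0 k (Y_index \<alpha>0 k j lam n) (j, lam) (j + k, a)))\<^sup>2) *
      (weight b * (cmod (Ybasis \<alpha>0 k (Y_index \<alpha>0 k j mu m) (j, mu) (j + k, b)))\<^sup>2)"
      using Y_index_shift[OF True] unfolding envelope_def m_def
      by (simp add: tweight_def power_mult_distrib algebra_simps)
  qed
  also have "\<dots> = Y_norm2 \<alpha>0 k j lam n * Y_norm2 \<alpha>0 k j mu m"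
    unfolding Y_norm2_def by (simp add: sum_product)
  also have "Y_norm2 \<alpha>0 k j mu m = shifted_Y_norm2 n"
  proof -
    have "nat (- level_shift) \<le> n + nat level_shift"
      "m = n + nat level_shift - nat (- level_shift)" using True unfolding m_def by auto
    then show ?thesis unfolding shifted_Y_norm2_def by simp
  qed
  finally show ?thesis .
qed

lemma envelope_summable_on:
  assumes "sq_summable (Y_norm2 \<alpha>0 k j lam)" "sq_summable (Y_norm2 \<alpha>0 k j mu)"
  shows "envelope summable_on UNIV"
proof (rule summable_on_level_blocks)
  show "0 \<le> envelope X" for X unfolding envelope_def by (simp add: tweight_nonneg)
  show "finite (level_block n)" for n unfolding level_block_def by (auto simp: finite_partitions)
  show "disjoint_family level_block"
    unfolding disjoint_family_on_def level_block_def partitions_def by auto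
  show "envelope X \<noteq> 0 \<Longrightarrow> X \<in> level_block (level X)" for X by (rule envelope_in_level_block)
  have "sq_summable shifted_Y_norm2"
    unfolding shifted_Y_norm2_def by (rule sq_summable_shift_if[OF assms(2)])
  then show "summable (\<lambda>n. sum envelope (level_block n))"
    unfolding sum_level_block_envelope by (rule summable_mult_sq_summable[OF assms(1)])
qed

end

section \<open>The series \<open>\<Phi>(\<alpha>,s)\<close>\<close>

text \<open>The only \<open>t\<close> at which the summand \<open>e\<close> of \<open>\<Psi>\<close> contributes to the coordinate \<open>X\<close>.\<close>

definition Phi_time :: "real \<Rightarrow> int \<Rightarrow> tidx \<Rightarrow> tidx \<Rightarrow> real" where
  "Phi_time \<alpha>0 k e X = Y_index \<alpha>0 k (fst (fst e)) (snd (fst e)) (level X)"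

lemma Phi_term_expand:
  assumes "finite S" "{e. \<Psi> e \<noteq> 0} \<subseteq> S"
  shows "Phi_term \<alpha>0 k s \<Psi> t X =
    (\<Sum>e\<in>S. \<Psi> e * (Ybasis \<alpha>0 k t (fst e) (fst X) * Ybasis \<alpha>0 k (t - of_int s) (snd e) (snd X)))"
proof -
  have "Phi_term \<alpha>0 k s \<Psi> t X = (\<Sum>e\<in>{e. \<Psi> e \<noteq> 0}.
      \<Psi> e * (Ybasis \<alpha>0 k t (fst e) (fst X) * Ybasis \<alpha>0 k (t - of_int s) (snd e) (snd X)))"
    unfolding Phi_term_def tensor_apply_def lin_ext_def[of _ \<Psi>] Ycoef_def lin_ext_basis
    by (simp add: case_prod_beta)
  also have "\<dots> = (\<Sum>e\<in>S. \<Psi> e * (Ybasis \<alpha>0 k t (fst e) (fst X) * Ybasis \<alpha>0 k (t - of_int s) (snd e) (snd X)))"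
    by (rule sum.mono_neutral_left) (use assms in auto)
  finally show ?thesis .
qed

lemma Ybasis_nonzero_Phi_time:
  assumes "Ybasis \<alpha>0 k t (fst e) (fst X) \<noteq> 0"
  shows "t = Phi_time \<alpha>0 k e X"
  using Ybasis_nonzero[of \<alpha>0 k t "fst (fst e)" "snd (fst e)" "fst (fst X)" "snd (fst X)"] assms
  unfolding Phi_time_def level_def by simp

lemma Phi_term_nonzero:
  assumes "finite_support \<Psi>" "Phi_term \<alpha>0 k s \<Psi> t X \<noteq> 0"
  shows "\<exists>e. \<Psi> e \<noteq> 0 \<and> t = Phi_time \<alpha>0 k e X"
proof -
  have "Phi_term \<alpha>0 k s \<Psi> t X = (\<Sum>e\<in>{e. \<Psi> e \<noteq> 0}.
      \<Psi> e * (Ybasis \<alpha>0 k t (fst e) (fst X) * Ybasis \<alpha>0 k (t - of_int s) (snd e) (snd X)))"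
    by (rule Phi_term_expand[OF assms(1) order_refl])
  with assms(2) obtain e where "e \<in> {e. \<Psi> e \<noteq> 0}"
    "\<Psi> e * (Ybasis \<alpha>0 k t (fst e) (fst X) * Ybasis \<alpha>0 k (t - of_int s) (snd e) (snd X)) \<noteq> 0"
    by (metis (no_types, lifting) sum.not_neutral_contains_not_neutral)
  then have "\<Psi> e \<noteq> 0" "Ybasis \<alpha>0 k t (fst e) (fst X) \<noteq> 0" by auto
  then show ?thesis using Ybasis_nonzero_Phi_time by blast
qed

lemma finite_Phi_term_nonzero:
  assumes "finite_support \<Psi>"
  shows "finite {t. Phi_term \<alpha>0 k s \<Psi> t X \<noteq> 0}"
proof -
  have "{t. Phi_term \<alpha>0 k s \<Psi> t X \<noteq> 0} \<subseteq> (\<lambda>e. Phi_time \<alpha>0 k e X) ` {e. \<Psi> e \<noteq> 0}"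
    using Phi_term_nonzero[OF assms] by blast
  then show ?thesis using assms finite_surj by blast
qed

lemma countable_Phi_term_nonzero:
  assumes "finite_support \<Psi>"
  shows "countable {t. Phi_term \<alpha>0 k s \<Psi> t \<noteq> (\<lambda>_. 0)}"
proof (rule countable_subset)
  show "{t. Phi_term \<alpha>0 k s \<Psi> t \<noteq> (\<lambda>_. 0)}
      \<subseteq> (\<Union>e\<in>{e. \<Psi> e \<noteq> 0}. range (Y_index \<alpha>0 k (fst (fst e)) (snd (fst e))))"
  proof
    fix t assume "t \<in> {t. Phi_term \<alpha>0 k s \<Psi> t \<noteq> (\<lambda>_. 0)}"
    then obtain X where "Phi_term \<alpha>0 k s \<Psi> t X \<noteq> 0" by (auto simp: fun_eq_iff)
    then obtain e where "\<Psi> e \<noteq> 0" "t = Phi_time \<alpha>0 k e X" using Phi_term_nonzero[OF assms] by blast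
    then show "t \<in> (\<Union>e\<in>{e. \<Psi> e \<noteq> 0}. range (Y_index \<alpha>0 k (fst (fst e)) (snd (fst e))))"
      unfolding Phi_time_def by blast
  qed
  show "countable (\<Union>e\<in>{e. \<Psi> e \<noteq> 0}. range (Y_index \<alpha>0 k (fst (fst e)) (snd (fst e))))"
    by (rule countable_UN[OF countable_finite]) (use assms in auto)
qed

lemma Phi_term_linear:
  assumes "finite_support \<Psi>1" "finite_support \<Psi>2"
  shows "Phi_term \<alpha>0 k s (\<lambda>x. a * \<Psi>1 x + b * \<Psi>2 x) t X =
    a * Phi_term \<alpha>0 k s \<Psi>1 t X + b * Phi_term \<alpha>0 k s \<Psi>2 t X"
proof -
  define S where "S = {e. \<Psi>1 e \<noteq> 0} \<union> {e. \<Psi>2 e \<noteq> 0}"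
  have fS: "finite S" unfolding S_def using assms by simp
  define K where "K e = Ybasis \<alpha>0 k t (fst e) (fst X) * Ybasis \<alpha>0 k (t - of_int s) (snd e) (snd X)" for e
  have "Phi_term \<alpha>0 k s (\<lambda>x. a * \<Psi>1 x + b * \<Psi>2 x) t X = (\<Sum>e\<in>S. (a * \<Psi>1 e + b * \<Psi>2 e) * K e)"
    unfolding K_def by (rule Phi_term_expand[OF fS]) (auto simp: S_def)
  moreover have "Phi_term \<alpha>0 k s \<Psi>1 t X = (\<Sum>e\<in>S. \<Psi>1 e * K e)"
    unfolding K_def by (rule Phi_term_expand[OF fS]) (auto simp: S_def)
  moreover have "Phi_term \<alpha>0 k s \<Psi>2 t X = (\<Sum>e\<in>S. \<Psi>2 e * K e)"
    unfolding K_def by (rule Phi_term_expand[OF fS]) (auto simp: S_def)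
  ultimately show ?thesis by (simp add: sum.distrib sum_distrib_left algebra_simps)
qed

lemma sum_le_single_support:
  fixes f :: "'a \<Rightarrow> real"
  assumes "finite T" "\<And>t. t \<noteq> \<tau> \<Longrightarrow> f t = 0" "\<And>t. 0 \<le> f t"
  shows "(\<Sum>t\<in>T. f t) \<le> f \<tau>"
proof -
  have "(\<Sum>t\<in>T. f t) = (\<Sum>t\<in>T \<inter> {\<tau>}. f t)"
    by (rule sum.mono_neutral_right) (use assms in auto)
  also have "\<dots> \<le> (\<Sum>t\<in>{\<tau>}. f t)" by (rule sum_mono2) (use assms in auto)
  finally show ?thesis by simp
qed

lemma sum_norm_Phi_term_le:
  assumes "finite_support \<Psi>"
  shows "(\<Sum>t\<in>{t. Phi_term \<alpha>0 k s \<Psi> t X \<noteq> 0}. cmod (Phi_term \<alpha>0 k s \<Psi> t X))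
    \<le> (\<Sum>e\<in>{e. \<Psi> e \<noteq> 0}. cmod (\<Psi> e) * (cmod (Ybasis \<alpha>0 k (Phi_time \<alpha>0 k e X) (fst e) (fst X)) *
         cmod (Ybasis \<alpha>0 k (Phi_time \<alpha>0 k e X - of_int s) (snd e) (snd X))))"
proof -
  define S where "S = {e. \<Psi> e \<noteq> 0}"
  define T where "T = {t. Phi_term \<alpha>0 k s \<Psi> t X \<noteq> 0}"
  have fS: "finite S" using assms by (simp add: S_def)
  have fT: "finite T" unfolding T_def by (rule finite_Phi_term_nonzero[OF assms])
  define f where "f e t = cmod (Ybasis \<alpha>0 k t (fst e) (fst X)) *
      cmod (Ybasis \<alpha>0 k (t - of_int s) (snd e) (snd X))" for e t
  have "(\<Sum>t\<in>T. cmod (Phi_term \<alpha>0 k s \<Psi> t X)) \<le> (\<Sum>t\<in>T. \<Sum>e\<in>S. cmod (\<Psi> e) * f e t)"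
    unfolding Phi_term_expand[OF fS, unfolded S_def, OF order_refl] f_def S_def
    by (intro sum_mono order.trans[OF norm_sum]) (simp add: norm_mult)
  also have "\<dots> = (\<Sum>e\<in>S. cmod (\<Psi> e) * (\<Sum>t\<in>T. f e t))"
    by (subst sum.swap) (simp add: sum_distrib_left)
  also have "\<dots> \<le> (\<Sum>e\<in>S. cmod (\<Psi> e) * f e (Phi_time \<alpha>0 k e X))"
    by (intro sum_mono mult_left_mono sum_le_single_support[OF fT])
      (auto simp: f_def dest: Ybasis_nonzero_Phi_time)
  finally show ?thesis unfolding S_def T_def f_def .
qed

lemma Dom_finite_support: "\<Psi> \<in> Dom \<Longrightarrow> finite_support \<Psi>"
  unfolding Dom_def by simp

lemma summable_on_sum:
  fixes f :: "'i \<Rightarrow> 'a \<Rightarrow> real"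
  assumes "finite I" "\<And>i. i \<in> I \<Longrightarrow> f i summable_on A"
  shows "(\<lambda>x. \<Sum>i\<in>I. f i x) summable_on A"
  using assms by (induction I rule: finite_induct) (auto intro: summable_on_add)

lemma dominated_series_Phi_term:
  assumes "(of_int k * \<alpha>0)\<^sup>2 < 1/2" and D: "\<Psi> \<in> Dom"
  shows "dominated_series (Phi_term \<alpha>0 k s \<Psi>)"
proof -
  define S where "S = {e. \<Psi> e \<noteq> 0}"
  have fin: "finite_support \<Psi>" by (rule Dom_finite_support[OF D])
  then have fS: "finite S" by (simp add: S_def)
  define GG where "GG e X = cmod (Ybasis \<alpha>0 k (Phi_time \<alpha>0 k e X) (fst e) (fst X)) *
      cmod (Ybasis \<alpha>0 k (Phi_time \<alpha>0 k e X - of_int s) (snd e) (snd X))" for e X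
  define g where "g X = (\<Sum>e\<in>S. cmod (\<Psi> e) * GG e X)" for X
  define env where "env e = envelope \<alpha>0 k (fst (fst e)) s (snd (fst e)) (snd (snd e))" for e :: tidx
  have env: "tweight X * (GG e X)\<^sup>2 = env e X" if "e \<in> S" for e X
  proof -
    obtain j lam j' mu where e: "e = ((j, lam), (j', mu))" by (metis prod.collapse)
    have "j = j'" using D that unfolding Dom_def S_def e by auto
    then show ?thesis unfolding env_def envelope_def GG_def Phi_time_def e by simp
  qed
  have "(\<lambda>X. \<Sum>e\<in>S. (real (card S) * (cmod (\<Psi> e))\<^sup>2) * env e X) summable_on UNIV"
    unfolding env_def
    by (intro summable_on_sum fS summable_on_cmult_right envelope_summable_on sq_summable_Y_norm2 assms(1))
  then have "(\<lambda>X. tweight X * (g X)\<^sup>2) summable_on UNIV"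
  proof (rule summable_on_comparison_test)
    fix X
    have "(g X)\<^sup>2 \<le> (\<Sum>e\<in>S. (cmod (\<Psi> e) * GG e X)\<^sup>2) * real (card S)"
      unfolding g_def by (rule sum_squared_le_sum_of_squares)
    then have "tweight X * (g X)\<^sup>2 \<le> tweight X * ((\<Sum>e\<in>S. (cmod (\<Psi> e) * GG e X)\<^sup>2) * real (card S))"
      by (rule mult_left_mono[OF _ tweight_nonneg])
    also have "\<dots> = (\<Sum>e\<in>S. (real (card S) * (cmod (\<Psi> e))\<^sup>2) * (tweight X * (GG e X)\<^sup>2))"
      by (simp add: sum_distrib_left sum_distrib_right power_mult_distrib algebra_simps)
    also have "\<dots> = (\<Sum>e\<in>S. (real (card S) * (cmod (\<Psi> e))\<^sup>2) * env e X)"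
      by (rule sum.cong) (simp_all add: env)
    finally show "tweight X * (g X)\<^sup>2 \<le> (\<Sum>e\<in>S. (real (card S) * (cmod (\<Psi> e))\<^sup>2) * env e X)" .
  qed (simp add: tweight_nonneg)
  moreover have "(\<Sum>t\<in>{t. Phi_term \<alpha>0 k s \<Psi> t X \<noteq> 0}. cmod (Phi_term \<alpha>0 k s \<Psi> t X)) \<le> g X" for X
    unfolding g_def GG_def S_def by (rule sum_norm_Phi_term_le[OF fin])
  ultimately show ?thesis
    unfolding dominated_series_def using finite_Phi_term_nonzero[OF fin] by blast
qed

definition Phi_op :: "real \<Rightarrow> int \<Rightarrow> int \<Rightarrow> tvec \<Rightarrow> tvec" where
  "Phi_op \<alpha>0 k s \<Psi> = (\<lambda>X. \<Sum>\<^sub>\<infinity>t. Phi_term \<alpha>0 k s \<Psi> t X + Phi_term \<alpha>0 (- k) s \<Psi> t X)"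

lemma Phi_op_linear:
  assumes "finite_support \<Psi>1" "finite_support \<Psi>2"
  shows "Phi_op \<alpha>0 k s (\<lambda>x. a * \<Psi>1 x + b * \<Psi>2 x) = (\<lambda>x. a * Phi_op \<alpha>0 k s \<Psi>1 x + b * Phi_op \<alpha>0 k s \<Psi>2 x)"
proof
  fix X
  define W where "W \<Psi> t = Phi_term \<alpha>0 k s \<Psi> t X + Phi_term \<alpha>0 (- k) s \<Psi> t X" for \<Psi> t
  have "(W \<Psi>) summable_on UNIV" if "finite_support \<Psi>" for \<Psi>
  proof (rule summable_on_finite_support)
    have "{t. W \<Psi> t \<noteq> 0} \<subseteq> {t. Phi_term \<alpha>0 k s \<Psi> t X \<noteq> 0} \<union> {t. Phi_term \<alpha>0 (- k) s \<Psi> t X \<noteq> 0}"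
      unfolding W_def by auto
    then show "finite {t. W \<Psi> t \<noteq> 0}"
      using finite_Phi_term_nonzero[OF that] by (meson finite_UnI finite_subset)
  qed
  then have s1: "W \<Psi>1 summable_on UNIV" and s2: "W \<Psi>2 summable_on UNIV" using assms by blast+
  have "W (\<lambda>x. a * \<Psi>1 x + b * \<Psi>2 x) = (\<lambda>t. a * W \<Psi>1 t + b * W \<Psi>2 t)"
    unfolding W_def Phi_term_linear[OF assms] by (simp add: algebra_simps)
  then have "infsum (W (\<lambda>x. a * \<Psi>1 x + b * \<Psi>2 x)) UNIV = a * infsum (W \<Psi>1) UNIV + b * infsum (W \<Psi>2) UNIV"
    by (simp add: infsum_add summable_on_cmult_right s1 s2 infsum_cmult_right')
  then show "Phi_op \<alpha>0 k s (\<lambda>x. a * \<Psi>1 x + b * \<Psi>2 x) X = a * Phi_op \<alpha>0 k s \<Psi>1 X + b * Phi_op \<alpha>0 k s \<Psi>2 X"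
    unfolding Phi_op_def W_def .
qed

lemma Phi_term_series:
  assumes "(of_int k * \<alpha>0)\<^sup>2 < 1/2" "\<Psi> \<in> Dom"
  shows "countable {t. Phi_term \<alpha>0 k s \<Psi> t \<noteq> (\<lambda>_. 0)} \<and> (\<exists>L. norm_conv (Phi_term \<alpha>0 k s \<Psi>) L)"
  using countable_Phi_term_nonzero[OF Dom_finite_support[OF assms(2)]]
    norm_conv_dominated_series[OF dominated_series_Phi_term[OF assms]] by blast

lemma norm_conv_Phi_op:
  assumes "(of_int k * \<alpha>0)\<^sup>2 < 1/2" "\<Psi> \<in> Dom"
  shows "norm_conv (\<lambda>t x. Phi_term \<alpha>0 k s \<Psi> t x + Phi_term \<alpha>0 (- k) s \<Psi> t x) (Phi_op \<alpha>0 k s \<Psi>)"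
proof -
  have "(of_int (- k) * \<alpha>0)\<^sup>2 < 1/2" using assms(1) by simp
  then show ?thesis unfolding Phi_op_def
    by (intro norm_conv_dominated_series dominated_series_add dominated_series_Phi_term assms)
qed

theorem mainTheorem3:
  fixes \<alpha>0 :: real and k :: int
  assumes "0 < \<bar>\<alpha>0\<bar>" and "\<bar>\<alpha>0\<bar> \<le> 1"
    and "\<bar>of_int k * \<alpha>0\<bar> < 1 / sqrt 2"
  shows "(\<forall>s::int. \<forall>\<Psi>\<in>Dom. countable {t. Phi_term \<alpha>0 k s \<Psi> t \<noteq> (\<lambda>_. 0)}
            \<and> (\<exists>L. norm_conv (Phi_term \<alpha>0 k s \<Psi>) L))
       \<and> (\<forall>s::int. \<forall>\<Psi>\<in>Dom. countable {t. Phi_term \<alpha>0 (- k) s \<Psi> t \<noteq> (\<lambda>_. 0)}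
            \<and> (\<exists>L. norm_conv (Phi_term \<alpha>0 (- k) s \<Psi>) L))
       \<and> (\<forall>s::int. \<exists>\<Phi> :: tvec \<Rightarrow> tvec.
            (\<forall>\<Psi>\<in>Dom. norm_conv (\<lambda>t. \<lambda>x. Phi_term \<alpha>0 k s \<Psi> t x + Phi_term \<alpha>0 (- k) s \<Psi> t x) (\<Phi> \<Psi>))
          \<and> (\<forall>\<Psi>1\<in>Dom. \<forall>\<Psi>2\<in>Dom. \<forall>a b.
               \<Phi> (\<lambda>x. a * \<Psi>1 x + b * \<Psi>2 x) = (\<lambda>x. a * \<Phi> \<Psi>1 x + b * \<Phi> \<Psi>2 x)))"
proof -
  \<comment> \<open>only the bound on \<open>k \<alpha>0\<close> is needed\<close>
  have "\<bar>of_int k * \<alpha>0\<bar>\<^sup>2 < (1 / sqrt 2)\<^sup>2"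
    using assms(3) by (rule power_strict_mono) auto
  then have small: "(of_int k * \<alpha>0)\<^sup>2 < 1/2" by (simp add: power_divide)
  then have small': "(of_int (- k) * \<alpha>0)\<^sup>2 < 1/2" by simp
  have series: "\<forall>s. \<forall>\<Psi>\<in>Dom. countable {t. Phi_term \<alpha>0 k' s \<Psi> t \<noteq> (\<lambda>_. 0)}
      \<and> (\<exists>L. norm_conv (Phi_term \<alpha>0 k' s \<Psi>) L)" if "(of_int k' * \<alpha>0)\<^sup>2 < 1/2" for k'
    using Phi_term_series[OF that] by blast
  have Phi: "\<exists>\<Phi>. (\<forall>\<Psi>\<in>Dom. norm_conv (\<lambda>t x. Phi_term \<alpha>0 k s \<Psi> t x + Phi_term \<alpha>0 (- k) s \<Psi> t x) (\<Phi> \<Psi>))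
      \<and> (\<forall>\<Psi>1\<in>Dom. \<forall>\<Psi>2\<in>Dom. \<forall>a b.
            \<Phi> (\<lambda>x. a * \<Psi>1 x + b * \<Psi>2 x) = (\<lambda>x. a * \<Phi> \<Psi>1 x + b * \<Phi> \<Psi>2 x))" for s
    using norm_conv_Phi_op[OF small] Phi_op_linear[OF Dom_finite_support Dom_finite_support]
    by (intro exI[of _ "Phi_op \<alpha>0 k s"] conjI ballI allI)
  show ?thesis by (intro conjI series[OF small] series[OF small'] allI Phi)
qed

end
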